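(* Let $L$ be a split regular Hom-Lie color algebra with symmetric root system $\Lambda$, and let $U$ be a vector space complement of $\mathrm{span}_{\mathbb{K}}\{[L_\alpha,L_{-\alpha}]:\alpha\in\Lambda\}$ in $H$. For each class $[\alpha]\in\Lambda/\sim$ put $I_{[\alpha]}:=L_{\Lambda_\alpha}$. Then each $I_{[\alpha]}$ is a well-defined ideal of $L$, $$L=U+\sum_{[\alpha]\in\Lambda/\sim}I_{[\alpha]},$$ and $[I_{[\alpha]},I_{[\beta]}]=0$ whenever $[\alpha]\neq[\beta]$.
   Context: Let $\mathbb{K}$ be a field and $\Gamma$ an abelian group. A bi-character is $\varepsilon:\Gamma\times\Gamma\to\mathbb{K}\setminus\{0\}$ with $\varepsilon(a,b)\varepsilon(b,a)=1$, $\varepsilon(a,b+c)=\varepsilon(a,b)\varepsilon(a,c)$, $\varepsilon(a+b,c)=\varepsilon(a,c)\varepsilon(b,c)$. A Hom-Lie color algebra $(L,[\cdot,\cdot],\phi,\varepsilon)$ is a $\Gamma$-graded space $L=\bigoplus_gL_g$ with bilinear $[\cdot,\cdot]$, $[L_g,L_h]\subset L_{g+h}$, linear $\phi$ with $\phi(L_g)\subset L_g$, $\phi([x,y])=[\phi x,\phi y]$, such that for homogeneous $x,y,z$ of degrees $\bar x,\bar y,\bar z$: $[x,y]=-\varepsilon(\bar x,\bar y)[y,x]$ and $\varepsilon(\bar z,\bar x)[\phi(x),[y,z]]+\varepsilon(\bar x,\bar y)[\phi(y),[z,x]]+\varepsilon(\bar y,\bar z)[\phi(z),[x,y]]=0$;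 regular means $\phi$ bijective. A subalgebra is a graded subspace $A$ with $[A,A]\subset A$, $\phi(A)=A$; abelian if $[A,A]=0$. An ideal is a graded subspace $I$ with $[I,L]\subset I$ and $\phi(I)=I$. $H=\bigoplus_gH_g$ is a maximal abelian graded subalgebra (so $\phi(H_0)=H_0$). For linear $\alpha:H_0\to\mathbb{K}$, $L_\alpha=\{v:[h,v]=\alpha(h)\phi(v)\ \forall h\in H_0\}$; $\Lambda=\{\alpha\in H_0^*\setminus\{0\}:L_\alpha\neq0\}$; $L$ is split if $L=H\oplus(\bigoplus_{\alpha\in\Lambda}L_\alpha)$. $\Lambda$ is symmetric if $\alpha\in\Lambda\Rightarrow-\alpha\in\Lambda$. For $z\in\mathbb{Z}$, $\alpha\phi^{z}:=\alpha\circ(\phi|_{H_0})^{z}$; $\mathbb{N}=\{0,1,2,\dots\}$. Connection: for $\alpha,\beta\in\Lambda$, $\alpha$ is connected to $\beta$ if there exist $k\ge1$ and $\alpha_1,\dots,\alpha_k\in\Lambda$ such that: if $k=1$, $\alpha_1\in\{\alpha\phi^{-n}:n\in\mathbb{N}\}\cap\{\pm\beta\phi^{-m}:m\in\mathbb{N}\}$; if $k\ge2$, then $\alpha_1\in\{\alpha\phi^{-n}:n\in\mathbb{N}\}$, for each $i=1,\dots,k-2$ one has $\alpha_1\phi^{-i}+\alpha_2\phi^{-i}+\alpha_3\phi^{-i+1}+\cdots+\alpha_{i+1}\phi^{-1}\in\Lambda$, and $\alpha_1\phi^{-k+1}+\alpha_2\phi^{-k+1}+\alpha_3\phi^{-k+2}+\cdots+\alpha_k\phi^{-1}\in\{\pm\beta\phi^{-m}:m\in\mathbb{N}\}$.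 Connectedness $\sim$ is an equivalence relation on $\Lambda$; $\Lambda_\alpha:=\{\beta\in\Lambda:\beta\sim\alpha\}$. Define $H_{\Lambda_\alpha}:=\mathrm{span}_{\mathbb{K}}\{[L_\beta,L_{-\beta}]:\beta\in\Lambda_\alpha\}\subset H$, $V_{\Lambda_\alpha}:=\bigoplus_{\beta\in\Lambda_\alpha}L_\beta$, and $L_{\Lambda_\alpha}:=H_{\Lambda_\alpha}\oplus V_{\Lambda_\alpha}$. *)

theory Defs
  imports Complex_Main
begin

text \<open>The ground field is a type 'k of class field; the underlying
space L is the whole of a type 'v, a vector space via scale.
Sums of subspaces are spans of unions.\<close>

definition bicharacter :: "('g::ab_group_add \<Rightarrow> 'g \<Rightarrow> 'k::field) \<Rightarrow> bool" where
  "bicharacter eps \<longleftrightarrow>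
     (\<forall>a b. eps a b \<noteq> 0) \<and>
     (\<forall>a b. eps a b * eps b a = 1) \<and>
     (\<forall>a b c. eps a (b + c) = eps a b * eps a c) \<and>
     (\<forall>a b c. eps (a + b) c = eps a c * eps b c)"

definition internal_direct_sum ::
  "('k::field \<Rightarrow> 'v::ab_group_add \<Rightarrow> 'v) \<Rightarrow> 'i set \<Rightarrow> ('i \<Rightarrow> 'v set) \<Rightarrow> bool" where
  "internal_direct_sum scale I W \<longleftrightarrow>
     (\<forall>i\<in>I. module.subspace scale (W i)) \<and>
     module.span scale (\<Union>i\<in>I. W i) = UNIV \<and>
     (\<forall>F x. finite F \<and> F \<subseteq> I \<and> (\<forall>i\<in>F. x i \<in> W i) \<and> sum x F = 0
            \<longrightarrow> (\<forall>i\<in>F. x i = 0))"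

definition graded_subspace ::
  "('k::field \<Rightarrow> 'v::ab_group_add \<Rightarrow> 'v) \<Rightarrow> ('g \<Rightarrow> 'v set) \<Rightarrow> 'v set \<Rightarrow> bool" where
  "graded_subspace scale Lg A \<longleftrightarrow>
     module.subspace scale A \<and> module.span scale (\<Union>g. A \<inter> Lg g) = A"

definition hom_lie_color ::
  "('k::field \<Rightarrow> 'v::ab_group_add \<Rightarrow> 'v) \<Rightarrow> ('g::ab_group_add \<Rightarrow> 'g \<Rightarrow> 'k)
   \<Rightarrow> ('g \<Rightarrow> 'v set) \<Rightarrow> ('v \<Rightarrow> 'v \<Rightarrow> 'v) \<Rightarrow> ('v \<Rightarrow> 'v) \<Rightarrow> bool" where
  "hom_lie_color scale eps Lg br phi \<longleftrightarrow>
     vector_space scale \<and> bicharacter eps \<and>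
     internal_direct_sum scale UNIV Lg \<and>
     (\<forall>x. Vector_Spaces.linear scale scale (br x)) \<and> (\<forall>y. Vector_Spaces.linear scale scale (\<lambda>x. br x y)) \<and>
     (\<forall>g h x y. x \<in> Lg g \<longrightarrow> y \<in> Lg h \<longrightarrow> br x y \<in> Lg (g + h)) \<and>
     Vector_Spaces.linear scale scale phi \<and>
     (\<forall>g. phi ` Lg g \<subseteq> Lg g) \<and>
     (\<forall>x y. phi (br x y) = br (phi x) (phi y)) \<and>
     (\<forall>a b x y. x \<in> Lg a \<longrightarrow> y \<in> Lg b \<longrightarrow> br x y = - scale (eps a b) (br y x)) \<and>
     (\<forall>a b c x y z. x \<in> Lg a \<longrightarrow> y \<in> Lg b \<longrightarrow> z \<in> Lg c \<longrightarrow>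
        scale (eps c a) (br (phi x) (br y z)) + scale (eps a b) (br (phi y) (br z x))
        + scale (eps b c) (br (phi z) (br x y)) = 0)"

definition regular_hom_lie_color where
  "regular_hom_lie_color scale eps Lg br phi \<longleftrightarrow>
     hom_lie_color scale eps Lg br phi \<and> bij phi"

definition graded_subalgebra where
  "graded_subalgebra scale Lg br phi A \<longleftrightarrow>
     graded_subspace scale Lg A \<and> (\<forall>x\<in>A. \<forall>y\<in>A. br x y \<in> A) \<and> phi ` A = A"

definition abelian_graded_subalgebra where
  "abelian_graded_subalgebra scale Lg br phi A \<longleftrightarrow>
     graded_subalgebra scale Lg br phi A \<and> (\<forall>x\<in>A. \<forall>y\<in>A. br x y = 0)"

definition maximal_abelian_graded_subalgebra where
  "maximal_abelian_graded_subalgebra scale Lg br phi H \<longleftrightarrow>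
     abelian_graded_subalgebra scale Lg br phi H \<and>
     (\<forall>H'. abelian_graded_subalgebra scale Lg br phi H' \<and> H \<subseteq> H' \<longrightarrow> H' = H)"

definition ideal where
  "ideal scale Lg br phi I \<longleftrightarrow>
     graded_subspace scale Lg I \<and> (\<forall>x\<in>I. \<forall>y. br x y \<in> I) \<and> phi ` I = I"

text \<open>Linear functionals on H_0 are represented by functions 'v => 'k that are
linear on H_0 and vanish outside H_0 (so each functional has a unique representative).\<close>
definition dual_on :: "('k::field \<Rightarrow> 'v::ab_group_add \<Rightarrow> 'v) \<Rightarrow> 'v set \<Rightarrow> ('v \<Rightarrow> 'k) set" where
  "dual_on scale H0 = {\<alpha>. (\<forall>x\<in>H0. \<forall>y\<in>H0. \<alpha> (x + y) = \<alpha> x + \<alpha> y) \<and>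
                         (\<forall>c. \<forall>x\<in>H0. \<alpha> (scale c x) = c * \<alpha> x) \<and>
                         (\<forall>x. x \<notin> H0 \<longrightarrow> \<alpha> x = 0)}"

definition root_space where
  "root_space scale br phi H0 \<alpha> = {v. \<forall>h\<in>H0. br h v = scale (\<alpha> h) (phi v)}"

definition roots where
  "roots scale br phi H0 =
     {\<alpha> \<in> dual_on scale H0. \<alpha> \<noteq> (\<lambda>_. 0) \<and> root_space scale br phi H0 \<alpha> \<noteq> {0}}"

definition split_alg where
  "split_alg scale br phi H H0 \<longleftrightarrow>
     internal_direct_sum scale (insert None (Some ` roots scale br phi H0))
       (\<lambda>i. case i of None \<Rightarrow> H | Some \<alpha> \<Rightarrow> root_space scale br phi H0 \<alpha>)"

definition neg_fun :: "('v \<Rightarrow> 'k::ab_group_add) \<Rightarrow> ('v \<Rightarrow> 'k)" where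
  "neg_fun \<alpha> = (\<lambda>x. - \<alpha> x)"

definition symmetric_roots where
  "symmetric_roots scale br phi H0 \<longleftrightarrow>
     (\<forall>\<alpha>\<in>roots scale br phi H0. neg_fun \<alpha> \<in> roots scale br phi H0)"

text \<open>alpha phi^(-n) := alpha o (phi restricted to H_0)^(-n). Since phi is bijective
with phi(H_0) = H_0, the inverse of the restriction is the restriction of inv phi.\<close>
definition phi_neg :: "('v \<Rightarrow> 'v) \<Rightarrow> 'v set \<Rightarrow> nat \<Rightarrow> ('v \<Rightarrow> 'k::zero) \<Rightarrow> ('v \<Rightarrow> 'k)" where
  "phi_neg phi H0 n \<alpha> = (\<lambda>x. if x \<in> H0 then \<alpha> ((inv phi ^^ n) x) else 0)"

text \<open>The i-th partial expression in the definition of connection: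
 al_1 phi^(-i) + al_2 phi^(-i) + al_3 phi^(-i+1) + ... + al_(i+1) phi^(-1).\<close>
definition conn_sum where
  "conn_sum phi H0 (al :: nat \<Rightarrow> 'v \<Rightarrow> 'k::ab_group_add) i =
     (\<lambda>x. phi_neg phi H0 i (al 1) x + (\<Sum>j\<in>{2..i+1}. phi_neg phi H0 (i + 2 - j) (al j) x))"

definition connected where
  "connected scale br phi H0 \<alpha> \<beta> \<longleftrightarrow>
     (\<exists>k al. k \<ge> 1 \<and> (\<forall>i\<in>{1..k}. al i \<in> roots scale br phi H0) \<and>
       (if k = 1 then
          al 1 \<in> {phi_neg phi H0 n \<alpha> | n. True} \<inter>
                  ({phi_neg phi H0 m \<beta> | m. True} \<union> {phi_neg phi H0 m (neg_fun \<beta>) | m. True})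
        else
          al 1 \<in> {phi_neg phi H0 n \<alpha> | n. True} \<and>
          (\<forall>i\<in>{1..k-2}. conn_sum phi H0 al i \<in> roots scale br phi H0) \<and>
          conn_sum phi H0 al (k - 1) \<in>
             {phi_neg phi H0 m \<beta> | m. True} \<union> {phi_neg phi H0 m (neg_fun \<beta>) | m. True}))"

definition root_class where
  "root_class scale br phi H0 \<alpha> = {\<beta> \<in> roots scale br phi H0. connected scale br phi H0 \<beta> \<alpha>}"

definition H_part where
  "H_part scale br phi H0 S =
     module.span scale {br x y | x y \<beta>. \<beta> \<in> S \<and> x \<in> root_space scale br phi H0 \<beta>
                                   \<and> y \<in> root_space scale br phi H0 (neg_fun \<beta>)}"

definition V_part where
  "V_part scale br phi H0 S = module.span scale (\<Union>\<beta>\<in>S. root_space scale br phi H0 \<beta>)"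

definition L_part where
  "L_part scale br phi H0 S =
     module.span scale (H_part scale br phi H0 S \<union> V_part scale br phi H0 S)"

end

theory Submission
  imports Defs "HOL-Library.Function_Algebras"
begin

text \<open>Connectedness is an equivalence relation on \<Lambda>: a connection is the same as a chain of
  roots s_0, ..., s_n with s_(i+1) = s_i \<phi>^-1 + c_i \<phi>^-1 (c_i \<in> \<Lambda>), and such chains can be
  reversed and concatenated. The Hom-Jacobi identity gives [L_\<beta>, L_\<gamma>] \<subseteq> L_((\<beta>+\<gamma>)\<phi>^-1) and
  [L_\<beta>, H] \<subseteq> L_(\<beta>\<phi>^-1), so a nonzero bracket of root vectors connects their roots, and
  [[L_\<beta>, L_-\<beta>], L_\<gamma>] = 0 when \<beta> and \<gamma> are not connected. As L is spanned by H and the root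
  spaces, each L_\<Lambda>\<alpha> is an ideal, different classes commute, and U together with the L_\<Lambda>\<alpha>
  spans H and every root space.\<close>

context module
begin

lemma span_UN_subspaces_sum:
  assumes sub: "\<And>i. i \<in> I \<Longrightarrow> subspace (W i)" and v: "v \<in> span (\<Union>i\<in>I. W i)"
  shows "\<exists>F c. finite F \<and> F \<subseteq> I \<and> v = sum c F \<and> (\<forall>i\<in>F. c i \<in> W i)"
  using v
proof (induction rule: span_induct_alt)
  case base
  show ?case by (intro exI[of _ "{}"]) auto
next
  case (step a x y)
  then obtain i F c where i: "i \<in> I" "x \<in> W i"
    and F: "finite F" "F \<subseteq> I" "y = sum c F" "\<forall>j\<in>F. c j \<in> W j" by blast
  define c' where "c' = c(i := scale a x + (if i \<in> F then c i else 0))"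
  have "scale a x + y = sum c' (insert i F)"
    using F by (cases "i \<in> F") (auto simp: c'_def sum.remove insert_absorb add.assoc intro!: sum.cong)
  moreover have "\<forall>j\<in>insert i F. c' j \<in> W j"
    using F i sub by (auto simp: c'_def intro!: subspace_add subspace_scale subspace_0)
  ultimately show ?case using F i by (intro exI[of _ "insert i F"] exI[of _ c']) auto
qed

lemma bilinear_span_subspace:
  assumes f_right: "\<And>a. module_hom scale scale (f a)"
    and f_left: "\<And>b. module_hom scale scale (\<lambda>a. f a b)"
    and T: "subspace T" and gen: "\<And>a b. a \<in> A \<Longrightarrow> b \<in> B \<Longrightarrow> f a b \<in> T"
    and x: "x \<in> span A" and y: "y \<in> span B"
  shows "f x y \<in> T"
proof -
  have "span B \<subseteq> f a -` T" if "a \<in> A" for a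
    using gen that by (intro span_minimal module_hom.subspace_vimage[OF f_right T]) auto
  then have "A \<subseteq> (\<lambda>a. f a y) -` T" using y by auto
  then have "span A \<subseteq> (\<lambda>a. f a y) -` T"
    by (intro span_minimal module_hom.subspace_vimage[OF f_left T])
  then show ?thesis using x by auto
qed

end

section \<open>Regular Hom-Lie color algebras\<close>

locale regular_hom_lie_color_alg =
  fixes scale :: "'k::field \<Rightarrow> 'v::ab_group_add \<Rightarrow> 'v"
    and eps :: "'g::ab_group_add \<Rightarrow> 'g \<Rightarrow> 'k"
    and Lg :: "'g \<Rightarrow> 'v set"
    and br :: "'v \<Rightarrow> 'v \<Rightarrow> 'v"
    and phi :: "'v \<Rightarrow> 'v"
  assumes regular: "regular_hom_lie_color scale eps Lg br phi"
begin

lemma hom_lie_color: "hom_lie_color scale eps Lg br phi" and bij_phi: "bij phi"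
  using regular unfolding regular_hom_lie_color_def by auto

sublocale vector_space scale
  using hom_lie_color unfolding hom_lie_color_def by (elim conjE)

lemma bicharacter_eps: "bicharacter eps"
  using hom_lie_color unfolding hom_lie_color_def by (elim conjE)

lemma Lg_direct_sum: "internal_direct_sum scale UNIV Lg"
  using hom_lie_color unfolding hom_lie_color_def by (elim conjE)

lemma linear_br_right: "Vector_Spaces.linear scale scale (br x)"
  using hom_lie_color unfolding hom_lie_color_def by (elim conjE) metis

lemma linear_br_left: "Vector_Spaces.linear scale scale (\<lambda>x. br x y)"
  using hom_lie_color unfolding hom_lie_color_def by (elim conjE) metis

lemma module_hom_phi: "module_hom scale scale phi"
  using hom_lie_color unfolding hom_lie_color_def by (elim conjE) (metis module_hom_linearI)

lemmas module_hom_br_right = module_hom_linearI[OF linear_br_right]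
  and module_hom_br_left = module_hom_linearI[OF linear_br_left]

lemma br_Lg: "x \<in> Lg a \<Longrightarrow> y \<in> Lg b \<Longrightarrow> br x y \<in> Lg (a + b)"
  using hom_lie_color unfolding hom_lie_color_def by (elim conjE) metis

lemma phi_Lg: "x \<in> Lg a \<Longrightarrow> phi x \<in> Lg a"
  using hom_lie_color unfolding hom_lie_color_def by (elim conjE) (metis image_subset_iff)

lemma phi_br: "phi (br x y) = br (phi x) (phi y)"
  using hom_lie_color unfolding hom_lie_color_def by (elim conjE) metis

lemma br_skew: "x \<in> Lg a \<Longrightarrow> y \<in> Lg b \<Longrightarrow> br x y = - scale (eps a b) (br y x)"
  using hom_lie_color unfolding hom_lie_color_def by (elim conjE) metis

lemma hom_jacobi: "x \<in> Lg a \<Longrightarrow> y \<in> Lg b \<Longrightarrow> z \<in> Lg c \<Longrightarrow>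
    scale (eps c a) (br (phi x) (br y z)) + scale (eps a b) (br (phi y) (br z x))
      + scale (eps b c) (br (phi z) (br x y)) = 0"
  using hom_lie_color unfolding hom_lie_color_def by (elim conjE) metis

lemmas br_add_right = module_hom.add[OF module_hom_br_right]
  and br_add_left = module_hom.add[OF module_hom_br_left]
  and br_scale_right = module_hom.scale[OF module_hom_br_right]
  and br_scale_left = module_hom.scale[OF module_hom_br_left]
  and br_zero_right [simp] = module_hom.zero[OF module_hom_br_right]
  and br_zero_left [simp] = module_hom.zero[OF module_hom_br_left]
  and br_uminus_right = module_hom.neg[OF module_hom_br_right]
  and br_sum_right = module_hom.sum[OF module_hom_br_right]
  and phi_add = module_hom.add[OF module_hom_phi]
  and phi_scale = module_hom.scale[OF module_hom_phi]
  and phi_uminus = module_hom.neg[OF module_hom_phi]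
  and phi_zero [simp] = module_hom.zero[OF module_hom_phi]
  and phi_sum = module_hom.sum[OF module_hom_phi]

lemma phi_inv_phi [simp]: "phi (inv phi x) = x"
  using bij_phi by (simp add: bij_is_surj surj_f_inv_f)

lemma inv_phi_phi [simp]: "inv phi (phi x) = x"
  using bij_phi by (simp add: bij_is_inj)

lemma phi_eq_iff [simp]: "phi x = phi y \<longleftrightarrow> x = y"
  by (metis inv_phi_phi)

lemma phi_eq_0_iff [simp]: "phi x = 0 \<longleftrightarrow> x = 0"
  using phi_eq_iff[of x 0] by simp

lemma module_hom_inv_phi: "module_hom scale scale (inv phi)"
proof -
  have "inv phi (x + y) = inv phi x + inv phi y" "inv phi (scale c x) = scale c (inv phi x)" for x y c
    by (rule phi_eq_iff[THEN iffD1], simp add: phi_add phi_scale)+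
  then show ?thesis by (simp add: module_hom_iff module_axioms)
qed

lemma eps_nonzero: "eps a b \<noteq> 0"
  using bicharacter_eps unfolding bicharacter_def by blast

lemma eps_zero_left [simp]: "eps 0 a = 1"
  using bicharacter_eps unfolding bicharacter_def by (metis add_0 mult_cancel_right2)

lemma eps_zero_right [simp]: "eps a 0 = 1"
  using bicharacter_eps unfolding bicharacter_def by (metis add_0 mult_cancel_left2)

lemma subspace_Lg: "subspace (Lg g)"
  using Lg_direct_sum unfolding internal_direct_sum_def by simp

lemma Lg_independent:
  "finite F \<Longrightarrow> \<forall>i\<in>F. x i \<in> Lg i \<Longrightarrow> sum x F = 0 \<Longrightarrow> i \<in> F \<Longrightarrow> x i = 0"
  using Lg_direct_sum unfolding internal_direct_sum_def by blast

lemma sum_in_Lg_imp_component_zero: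
  assumes F: "finite F" "\<forall>g\<in>F. c g \<in> Lg g" and sum: "sum c F \<in> Lg g0"
    and g: "g \<in> F" "g \<noteq> g0"
  shows "c g = 0"
proof -
  define z where "z h = (if h \<in> F then c h else 0) - (if h = g0 then sum c F else 0)" for h
  have "insert g0 F \<inter> F = F" by blast
  then have "sum z (insert g0 F) = 0"
    using F by (simp add: z_def sum_subtractf sum.If_cases)
  moreover have "\<forall>h\<in>insert g0 F. z h \<in> Lg h"
    using F sum subspace_Lg
    by (auto simp: z_def intro!: subspace_diff subspace_0 subspace_neg)
  ultimately have "z g = 0" using Lg_independent[of "insert g0 F" z g] F g by simp
  then show ?thesis using g by (simp add: z_def)
qed

definition has_homogeneous_components :: "'v set \<Rightarrow> bool" where
  "has_homogeneous_components A \<longleftrightarrow>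
     (\<forall>v\<in>A. \<exists>F c. finite F \<and> v = sum c F \<and> (\<forall>g\<in>F. c g \<in> A \<inter> Lg g))"

lemma has_homogeneous_componentsE:
  assumes "has_homogeneous_components A" "v \<in> A"
  obtains F c where "finite F" "v = sum c F" "\<And>g. g \<in> F \<Longrightarrow> c g \<in> A" "\<And>g. g \<in> F \<Longrightarrow> c g \<in> Lg g"
proof -
  obtain F c where "finite F" "v = sum c F" "\<forall>g\<in>F. c g \<in> A \<inter> Lg g"
    using assms unfolding has_homogeneous_components_def by blast
  then show ?thesis by (intro that) auto
qed

lemma graded_subspace_has_homogeneous_components:
  assumes graded: "graded_subspace scale Lg A"
  shows "has_homogeneous_components A"
  unfolding has_homogeneous_components_def
proof
  fix v assume "v \<in> A"
  with graded have "v \<in> span (\<Union>g\<in>UNIV. A \<inter> Lg g)" unfolding graded_subspace_def by simp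
  moreover have "subspace (A \<inter> Lg g)" for g
    using graded subspace_Lg unfolding graded_subspace_def by (blast intro: subspace_inter)
  ultimately show "\<exists>F c. finite F \<and> v = sum c F \<and> (\<forall>g\<in>F. c g \<in> A \<inter> Lg g)"
    using span_UN_subspaces_sum[of UNIV "\<lambda>g. A \<inter> Lg g" v] by blast
qed

lemma has_homogeneous_components_UNIV: "has_homogeneous_components UNIV"
proof (rule graded_subspace_has_homogeneous_components)
  show "graded_subspace scale Lg UNIV"
    using Lg_direct_sum unfolding graded_subspace_def internal_direct_sum_def by simp
qed

lemma homogeneous_decomposition:
  obtains F c where "finite F" "v = sum c F" "\<And>g. g \<in> F \<Longrightarrow> c g \<in> Lg g"
  by (rule has_homogeneous_componentsE[OF has_homogeneous_components_UNIV UNIV_I]) (auto intro: that)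

lemma mem_by_homogeneous_components:
  assumes "has_homogeneous_components A" "subspace T" "x \<in> A"
    and hom: "\<And>a x. x \<in> A \<Longrightarrow> x \<in> Lg a \<Longrightarrow> x \<in> T"
  shows "x \<in> T"
proof -
  obtain F c where F: "finite F" "x = sum c F"
    "\<And>g. g \<in> F \<Longrightarrow> c g \<in> A" "\<And>g. g \<in> F \<Longrightarrow> c g \<in> Lg g"
    using assms(1,3) by (rule has_homogeneous_componentsE) (auto intro: that)
  have "c g \<in> T" if "g \<in> F" for g
    using F(3,4)[OF that] by (rule hom)
  then show ?thesis unfolding F(2) by (rule subspace_sum[OF assms(2)])
qed

lemma br_mem_by_homogeneous_components:
  assumes hA: "has_homogeneous_components A" and hB: "has_homogeneous_components B"
    and T: "subspace T" and x: "x \<in> A" and y: "y \<in> B"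
    and hom: "\<And>a b x y. x \<in> A \<Longrightarrow> x \<in> Lg a \<Longrightarrow> y \<in> B \<Longrightarrow> y \<in> Lg b \<Longrightarrow> br x y \<in> T"
  shows "br x y \<in> T"
proof -
  have homogeneous_left: "y \<in> br x' -` T" if "x' \<in> A" "x' \<in> Lg a" for x' a
    using hB module_hom.subspace_vimage[OF module_hom_br_right T] y
    by (rule mem_by_homogeneous_components) (use hom that in blast)
  have "x \<in> (\<lambda>x. br x y) -` T"
    using hA module_hom.subspace_vimage[OF module_hom_br_left T] x
    by (rule mem_by_homogeneous_components) (use homogeneous_left in auto)
  then show ?thesis by simp
qed

lemma inv_phi_Lg:
  assumes x: "x \<in> Lg a" shows "inv phi x \<in> Lg a"
proof -
  obtain F c where F: "finite F" "inv phi x = sum c F" "\<And>g. g \<in> F \<Longrightarrow> c g \<in> Lg g"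
    by (rule homogeneous_decomposition) (auto intro: that)
  have "phi (inv phi x) \<in> Lg a" using x by simp
  then have sum_Lg: "sum (\<lambda>g. phi (c g)) F \<in> Lg a" unfolding F(2) phi_sum .
  have "c g \<in> Lg a" if g: "g \<in> F" for g
  proof (cases "g = a")
    case True
    then show ?thesis using F(3)[OF g] by simp
  next
    case False
    have "phi (c g) = 0"
      using sum_in_Lg_imp_component_zero[OF F(1) _ sum_Lg g False] F(3) phi_Lg by blast
    then show ?thesis using subspace_0[OF subspace_Lg] by simp
  qed
  then show ?thesis unfolding F(2) by (rule subspace_sum[OF subspace_Lg])
qed

lemma hom_jacobi_vanishing:
  assumes x: "x \<in> Lg a" and y: "y \<in> Lg b" and z: "z \<in> Lg c"
    and yz: "br y z = 0" and zx: "br z x = 0"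
  shows "br (phi z) (br x y) = 0" "br (br x y) (phi z) = 0"
proof -
  have "scale (eps b c) (br (phi z) (br x y)) = 0"
    using hom_jacobi[OF z x y] yz zx by simp
  then show zxy: "br (phi z) (br x y) = 0" using eps_nonzero by simp
  show "br (br x y) (phi z) = 0"
    using br_skew[OF br_Lg[OF x y] phi_Lg[OF z]] zxy by simp
qed

end

section \<open>Root spaces of a split algebra\<close>

definition signed :: "bool \<Rightarrow> 'a \<Rightarrow> 'a::uminus" where
  "signed b f = (if b then f else - f)"

lemma signed_signed: "signed b (signed c f) = signed (b = c) (f :: 'a::group_add)"
  by (simp add: signed_def)

lemma signed_add: "signed b (f + g) = signed b f + signed b (g :: 'a::ab_group_add)"
  by (simp add: signed_def)

locale split_hom_lie_color_alg = regular_hom_lie_color_alg +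
  fixes H
  assumes abelian: "abelian_graded_subalgebra scale Lg br phi H"
    and split: "split_alg scale br phi H (H \<inter> Lg 0)"
    and symmetric: "symmetric_roots scale br phi (H \<inter> Lg 0)"
    \<comment> \<open>supplied in the main theorem by the complement \<open>U\<close> of \<open>H_part\<close> in \<open>H\<close>\<close>
    and H_part_roots: "H_part scale br phi (H \<inter> Lg 0) (roots scale br phi (H \<inter> Lg 0)) \<subseteq> H"
begin

abbreviation "H0 \<equiv> H \<inter> Lg 0"
abbreviation "\<Lambda> \<equiv> roots scale br phi H0"
abbreviation "L_root \<equiv> root_space scale br phi H0"
abbreviation "shift \<equiv> phi_neg phi H0"
abbreviation "dual \<equiv> dual_on scale H0"
abbreviation "conn \<equiv> connected scale br phi H0"

lemma graded_subspace_H: "graded_subspace scale Lg H"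
  using abelian unfolding abelian_graded_subalgebra_def graded_subalgebra_def by blast

lemma phi_image_H: "phi ` H = H"
  using abelian unfolding abelian_graded_subalgebra_def graded_subalgebra_def by blast

lemma br_H_H: "x \<in> H \<Longrightarrow> y \<in> H \<Longrightarrow> br x y = 0"
  using abelian unfolding abelian_graded_subalgebra_def graded_subalgebra_def by blast

lemma subspace_H: "subspace H"
  using graded_subspace_H unfolding graded_subspace_def by blast

lemma has_homogeneous_components_H: "has_homogeneous_components H"
  using graded_subspace_H by (rule graded_subspace_has_homogeneous_components)

lemma subspace_H0: "subspace H0"
  using subspace_H subspace_Lg by (rule subspace_inter)

lemma phi_H0: "h \<in> H0 \<Longrightarrow> phi h \<in> H0"
  using phi_image_H phi_Lg by blast

lemma inv_phi_H0:
  assumes h: "h \<in> H0" shows "inv phi h \<in> H0"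
proof -
  have "inv phi h \<in> H"
    using h phi_image_H by (metis IntD1 imageE inv_phi_phi)
  then show ?thesis using h inv_phi_Lg by blast
qed

lemma inv_phi_pow_H0: "h \<in> H0 \<Longrightarrow> (inv phi ^^ n) h \<in> H0"
  by (induction n) (simp_all add: inv_phi_H0 del: Int_iff)

lemma phi_pow_H0: "h \<in> H0 \<Longrightarrow> (phi ^^ n) h \<in> H0"
  by (induction n) (simp_all add: phi_H0 del: Int_iff)

lemma inv_phi_pow_phi_pow [simp]: "(inv phi ^^ n) ((phi ^^ n) x) = x"
proof (induction n)
  case (Suc n)
  have "(inv phi ^^ Suc n) ((phi ^^ Suc n) x) = (inv phi ^^ n) (inv phi (phi ((phi ^^ n) x)))"
    by (simp only: funpow_Suc_right[of n "inv phi"] funpow.simps(2)[of n phi] o_apply)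
  then show ?case using Suc by simp
qed simp

lemma phi_pow_eq_0_iff [simp]: "(phi ^^ n) v = 0 \<longleftrightarrow> v = 0"
  by (induction n) simp_all

lemma subspace_root_space: "subspace (L_root \<alpha>)"
  unfolding root_space_def
  by (rule subspaceI) (auto simp: br_add_right br_scale_right phi_add phi_scale scale_right_distrib)

lemma has_homogeneous_components_root_space: "has_homogeneous_components (L_root \<alpha>)"
  unfolding has_homogeneous_components_def
proof
  fix v assume v: "v \<in> L_root \<alpha>"
  obtain F c where F: "finite F" "v = sum c F" "\<And>g. g \<in> F \<Longrightarrow> c g \<in> Lg g"
    by (rule homogeneous_decomposition) (auto intro: that)
  have "c g \<in> L_root \<alpha>" if g: "g \<in> F" for g
    unfolding root_space_def
  proof (intro CollectI ballI)
    fix h assume h: "h \<in> H0"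
    let ?z = "\<lambda>g. br h (c g) - scale (\<alpha> h) (phi (c g))"
    have "sum ?z F = br h v - scale (\<alpha> h) (phi v)"
      using F by (simp add: sum_subtractf br_sum_right phi_sum scale_sum_right)
    also have "\<dots> = 0" using v h unfolding root_space_def by simp
    finally have "sum ?z F = 0" .
    moreover have "\<forall>g'\<in>F. ?z g' \<in> Lg g'"
      using F(3) h br_Lg[of h 0] phi_Lg
      by (auto intro!: subspace_diff[OF subspace_Lg] subspace_scale[OF subspace_Lg])
    ultimately have "?z g = 0" using Lg_independent[OF F(1), of ?z g] g by blast
    then show "br h (c g) = scale (\<alpha> h) (phi (c g))" by simp
  qed
  then show "\<exists>F c. finite F \<and> v = sum c F \<and> (\<forall>g\<in>F. c g \<in> L_root \<alpha> \<inter> Lg g)"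
    using F by blast
qed

lemma shift_apply_H0: "x \<in> H0 \<Longrightarrow> shift n f x = f ((inv phi ^^ n) x)"
  by (simp add: phi_neg_def del: Int_iff)

lemma shift_apply_outside: "x \<notin> H0 \<Longrightarrow> shift n f x = 0"
  by (simp add: phi_neg_def del: Int_iff)

lemma dual_outside: "f \<in> dual \<Longrightarrow> x \<notin> H0 \<Longrightarrow> f x = 0"
  by (simp add: dual_on_def del: Int_iff)

lemma dual_add: "f \<in> dual \<Longrightarrow> x \<in> H0 \<Longrightarrow> y \<in> H0 \<Longrightarrow> f (x + y) = f x + f y"
  by (simp add: dual_on_def del: Int_iff)

lemma dual_scale: "f \<in> dual \<Longrightarrow> x \<in> H0 \<Longrightarrow> f (scale c x) = c * f x"
  by (simp add: dual_on_def del: Int_iff)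

lemma dual_onI:
  "(\<And>x y. x \<in> H0 \<Longrightarrow> y \<in> H0 \<Longrightarrow> f (x + y) = f x + f y) \<Longrightarrow>
   (\<And>c x. x \<in> H0 \<Longrightarrow> f (scale c x) = c * f x) \<Longrightarrow> (\<And>x. x \<notin> H0 \<Longrightarrow> f x = 0) \<Longrightarrow> f \<in> dual"
  unfolding dual_on_def by (simp del: Int_iff)

lemma dual_plus: "f \<in> dual \<Longrightarrow> g \<in> dual \<Longrightarrow> f + g \<in> dual"
  by (rule dual_onI) (simp_all add: dual_add dual_scale dual_outside algebra_simps del: Int_iff)

lemma dual_nonzero: "f \<in> dual \<Longrightarrow> f \<noteq> 0 \<Longrightarrow> \<exists>x\<in>H0. f x \<noteq> 0"
  by (metis dual_outside ext zero_fun_apply)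

lemma shift_0: "f \<in> dual \<Longrightarrow> shift 0 f = f"
  by (rule ext) (simp add: phi_neg_def dual_outside del: Int_iff)

lemma shift_shift: "shift m (shift n f) = shift (n + m) f"
proof (rule ext)
  fix x show "shift m (shift n f) x = shift (n + m) f x"
    by (cases "x \<in> H0") (simp_all add: shift_apply_H0 shift_apply_outside inv_phi_pow_H0 funpow_add del: Int_iff)
qed

lemma shift_add: "shift n (f + g) = shift n f + shift n (g :: _ \<Rightarrow> 'r::ab_group_add)"
  by (rule ext) (simp add: phi_neg_def del: Int_iff)

lemma shift_uminus: "shift n (- f) = - shift n (f :: _ \<Rightarrow> 'r::ab_group_add)"
  by (rule ext) (simp add: phi_neg_def del: Int_iff)

lemma inv_phi_pow_add: "(inv phi ^^ n) (x + y) = (inv phi ^^ n) x + (inv phi ^^ n) y"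
  by (induction n) (simp_all add: module_hom.add[OF module_hom_inv_phi])

lemma inv_phi_pow_scale: "(inv phi ^^ n) (scale c x) = scale c ((inv phi ^^ n) x)"
  by (induction n) (simp_all add: module_hom.scale[OF module_hom_inv_phi])

lemma shift_dual:
  assumes f: "f \<in> dual" shows "shift n f \<in> dual"
proof (rule dual_onI)
  fix x y assume "x \<in> H0" "y \<in> H0"
  moreover have "x + y \<in> H0" using calculation by (rule subspace_add[OF subspace_H0])
  ultimately show "shift n f (x + y) = shift n f x + shift n f y"
    by (simp add: shift_apply_H0 inv_phi_pow_add dual_add[OF f] inv_phi_pow_H0 del: Int_iff)
next
  fix c x assume "x \<in> H0"
  moreover have "scale c x \<in> H0" using calculation by (rule subspace_scale[OF subspace_H0])
  ultimately show "shift n f (scale c x) = c * shift n f x"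
    by (simp add: shift_apply_H0 inv_phi_pow_scale dual_scale[OF f] inv_phi_pow_H0 del: Int_iff)
qed (rule shift_apply_outside)

lemma shift_nonzero:
  assumes f: "f \<in> dual" "f \<noteq> 0" shows "shift n f \<noteq> 0"
proof
  assume "shift n f = 0"
  moreover obtain x where x: "x \<in> H0" "f x \<noteq> 0" using dual_nonzero[OF f] by blast
  moreover have "shift n f ((phi ^^ n) x) = f x"
    using phi_pow_H0[OF x(1)] by (simp add: shift_apply_H0 del: Int_iff)
  ultimately show False by simp
qed

lemma root_space_shift_Suc:
  assumes v: "v \<in> L_root \<alpha>" shows "phi v \<in> L_root (shift 1 \<alpha>)"
  unfolding root_space_def
proof (intro CollectI ballI)
  fix h assume h: "h \<in> H0"
  have "br h (phi v) = phi (br (inv phi h) v)" by (simp add: phi_br)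
  also have "\<dots> = phi (scale (\<alpha> (inv phi h)) (phi v))"
    using v inv_phi_H0[OF h] unfolding root_space_def by simp
  also have "\<dots> = scale (shift 1 \<alpha> h) (phi (phi v))"
    using h by (simp add: phi_scale shift_apply_H0 del: Int_iff)
  finally show "br h (phi v) = scale (shift 1 \<alpha> h) (phi (phi v))" .
qed

lemma root_space_shift: "v \<in> L_root \<alpha> \<Longrightarrow> (phi ^^ n) v \<in> L_root (shift n \<alpha>)"
proof (induction n)
  case 0
  then show ?case by (simp add: root_space_def shift_apply_H0 del: Int_iff)
next
  case (Suc n)
  then show ?case using root_space_shift_Suc[of "(phi ^^ n) v" "shift n \<alpha>"] by (simp add: shift_shift)
qed

lemma roots_iff: "\<alpha> \<in> \<Lambda> \<longleftrightarrow> \<alpha> \<in> dual \<and> \<alpha> \<noteq> 0 \<and> (\<exists>v. v \<in> L_root \<alpha> \<and> v \<noteq> 0)"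
  using subspace_0[OF subspace_root_space[of \<alpha>]] unfolding roots_def zero_fun_def by blast

lemma roots_dual: "\<alpha> \<in> \<Lambda> \<Longrightarrow> \<alpha> \<in> dual"
  by (simp add: roots_iff)

lemma roots_shift:
  assumes \<alpha>: "\<alpha> \<in> \<Lambda>" shows "shift n \<alpha> \<in> \<Lambda>"
proof -
  obtain v where "v \<in> L_root \<alpha>" "v \<noteq> 0" using \<alpha> by (auto simp: roots_iff)
  then have "(phi ^^ n) v \<in> L_root (shift n \<alpha>)" "(phi ^^ n) v \<noteq> 0"
    by (simp_all add: root_space_shift)
  then show ?thesis using \<alpha> shift_dual shift_nonzero by (auto simp: roots_iff)
qed

lemma neg_fun_eq: "neg_fun \<alpha> = - \<alpha>"
  by (rule ext) (simp add: neg_fun_def)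

lemma roots_uminus: "\<alpha> \<in> \<Lambda> \<Longrightarrow> - \<alpha> \<in> \<Lambda>"
  using symmetric unfolding symmetric_roots_def neg_fun_eq by blast

lemma roots_signed: "\<alpha> \<in> \<Lambda> \<Longrightarrow> signed b \<alpha> \<in> \<Lambda>"
  by (simp add: signed_def roots_uminus)

lemma shift_signed: "shift n (signed b f) = signed b (shift n (f :: _ \<Rightarrow> 'r::ab_group_add))"
  by (simp add: signed_def shift_uminus)

definition unshift where
  "unshift \<alpha> = (\<lambda>x. if x \<in> H0 then \<alpha> (phi x) else 0)"

lemma unshift_uminus: "unshift (- f) = - unshift (f :: _ \<Rightarrow> 'r::ab_group_add)"
  by (rule ext) (simp add: unshift_def)

lemma unshift_dual:
  assumes f: "f \<in> dual" shows "unshift f \<in> dual"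
proof (rule dual_onI)
  fix x y assume "x \<in> H0" "y \<in> H0"
  moreover have "x + y \<in> H0" using calculation by (rule subspace_add[OF subspace_H0])
  ultimately show "unshift f (x + y) = unshift f x + unshift f y"
    by (simp add: unshift_def phi_add dual_add[OF f] phi_H0 del: Int_iff)
next
  fix c x assume "x \<in> H0"
  moreover have "scale c x \<in> H0" using calculation by (rule subspace_scale[OF subspace_H0])
  ultimately show "unshift f (scale c x) = c * unshift f x"
    by (simp add: unshift_def phi_scale dual_scale[OF f] phi_H0 del: Int_iff)
qed (simp add: unshift_def del: Int_iff)

lemma shift_unshift:
  assumes f: "f \<in> dual" shows "shift 1 (unshift f) = f"
proof (rule ext)
  fix x show "shift 1 (unshift f) x = f x"
    by (cases "x \<in> H0")
      (simp_all add: shift_apply_H0 shift_apply_outside unshift_def inv_phi_H0 dual_outside[OF f] del: Int_iff)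
qed

lemma root_space_unshift:
  assumes v: "v \<in> L_root \<alpha>" shows "inv phi v \<in> L_root (unshift \<alpha>)"
  unfolding root_space_def
proof (intro CollectI ballI)
  fix h assume h: "h \<in> H0"
  have "phi (br h (inv phi v)) = br (phi h) v" by (simp add: phi_br)
  also have "\<dots> = scale (\<alpha> (phi h)) (phi v)"
    using v phi_H0[OF h] unfolding root_space_def by simp
  also have "\<dots> = phi (scale (unshift \<alpha> h) (phi (inv phi v)))"
    using h by (simp add: phi_scale unshift_def del: Int_iff)
  finally show "br h (inv phi v) = scale (unshift \<alpha> h) (phi (inv phi v))" by simp
qed

lemma roots_unshift:
  assumes \<alpha>: "\<alpha> \<in> \<Lambda>" shows "unshift \<alpha> \<in> \<Lambda>"
proof -
  obtain v where "v \<in> L_root \<alpha>" "v \<noteq> 0" using \<alpha> by (auto simp: roots_iff)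
  then have "inv phi v \<in> L_root (unshift \<alpha>)" "inv phi v \<noteq> 0"
    using root_space_unshift by (auto dest: arg_cong[where f = phi])
  moreover have "unshift \<alpha> \<noteq> 0"
  proof
    assume "unshift \<alpha> = 0"
    then have "\<alpha> = shift 1 0" using shift_unshift[OF roots_dual[OF \<alpha>]] by simp
    also have "\<dots> = 0" by (rule ext) (simp add: phi_neg_def)
    finally show False using \<alpha> by (simp add: roots_iff)
  qed
  ultimately show ?thesis using \<alpha> unshift_dual roots_dual by (auto simp: roots_iff)
qed


lemma br_homogeneous_root_vectors:
  assumes x: "x \<in> L_root \<beta>" "x \<in> Lg a" and y: "y \<in> L_root \<gamma>" "y \<in> Lg b"
  shows "br x y \<in> L_root (shift 1 (\<beta> + \<gamma>))"
  unfolding root_space_def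
proof (intro CollectI ballI)
  fix h' assume h': "h' \<in> H0"
  define h where "h = inv phi h'"
  have h: "h \<in> H0" "h \<in> Lg 0" unfolding h_def using inv_phi_H0[OF h'] by simp_all
  have hx: "br h x = scale (\<beta> h) (phi x)" and hy: "br h y = scale (\<gamma> h) (phi y)"
    using x y h unfolding root_space_def by simp_all
  have yh: "br y h = - scale (\<gamma> h) (phi y)"
    using br_skew[OF y(2) h(2)] hy by simp
  have yx: "scale (eps a b) (br y x) = - br x y"
    using br_skew[OF x(2) y(2)] by simp
  have "scale (eps a b) (br (phi y) (br h x)) = scale (\<beta> h) (phi (scale (eps a b) (br y x)))"
    unfolding hx by (simp add: br_scale_right phi_br phi_scale scale_left_commute)
  also have "\<dots> = - scale (\<beta> h) (phi (br x y))"
    unfolding yx by (simp add: phi_uminus)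
  finally have "br (phi h) (br x y) + - scale (\<gamma> h) (phi (br x y)) + - scale (\<beta> h) (phi (br x y)) = 0"
    using hom_jacobi[OF h(2) x(2) y(2)] unfolding yh by (simp add: br_uminus_right br_scale_right phi_br)
  then have "br (phi h) (br x y) = scale (\<beta> h + \<gamma> h) (phi (br x y))"
    by (simp add: scale_left_distrib algebra_simps eq_neg_iff_add_eq_0 add_eq_0_iff2)
  then show "br h' (br x y) = scale (shift 1 (\<beta> + \<gamma>) h') (phi (br x y))"
    using h' by (simp add: h_def shift_apply_H0 del: Int_iff)
qed

lemma br_homogeneous_root_vector_H:
  assumes x: "x \<in> L_root \<beta>" "x \<in> Lg a" and z: "z \<in> H" "z \<in> Lg c"
  shows "br x z \<in> L_root (shift 1 \<beta>)"
  unfolding root_space_def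
proof (intro CollectI ballI)
  fix h' assume h': "h' \<in> H0"
  define h where "h = inv phi h'"
  have h: "h \<in> H0" "h \<in> Lg 0" unfolding h_def using inv_phi_H0[OF h'] by simp_all
  have hx: "br h x = scale (\<beta> h) (phi x)"
    using x h unfolding root_space_def by simp
  have zx: "scale (eps a c) (br z x) = - br x z"
    using br_skew[OF x(2) z(2)] by simp
  have "scale (eps a c) (br (phi z) (br h x)) = scale (\<beta> h) (phi (scale (eps a c) (br z x)))"
    unfolding hx by (simp add: br_scale_right phi_br phi_scale scale_left_commute)
  also have "\<dots> = - scale (\<beta> h) (phi (br x z))"
    unfolding zx by (simp add: phi_uminus)
  finally have "br (phi h) (br x z) + - scale (\<beta> h) (phi (br x z)) = 0"
    using hom_jacobi[OF h(2) x(2) z(2)] br_H_H[OF z(1) IntD1[OF h(1)]] by simp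
  then have "br (phi h) (br x z) = scale (\<beta> h) (phi (br x z))"
    by (simp add: eq_neg_iff_add_eq_0 add_eq_0_iff2)
  then show "br h' (br x z) = scale (shift 1 \<beta> h') (phi (br x z))"
    using h' by (simp add: h_def shift_apply_H0 del: Int_iff)
qed

lemma br_root_spaces:
  assumes "x \<in> L_root \<beta>" "y \<in> L_root \<gamma>"
  shows "br x y \<in> L_root (shift 1 (\<beta> + \<gamma>))"
  using has_homogeneous_components_root_space has_homogeneous_components_root_space
    subspace_root_space assms
  by (rule br_mem_by_homogeneous_components) (rule br_homogeneous_root_vectors)

lemma br_root_space_H:
  assumes "x \<in> L_root \<beta>" "z \<in> H"
  shows "br x z \<in> L_root (shift 1 \<beta>)"
  using has_homogeneous_components_root_space has_homogeneous_components_H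
    subspace_root_space assms
  by (rule br_mem_by_homogeneous_components) (rule br_homogeneous_root_vector_H)

lemma br_H_root_space:
  assumes "z \<in> H" "x \<in> L_root \<beta>"
  shows "br z x \<in> L_root (shift 1 \<beta>)"
  using has_homogeneous_components_H has_homogeneous_components_root_space
    subspace_root_space assms
proof (rule br_mem_by_homogeneous_components)
  fix c a z x assume "z \<in> H" "z \<in> Lg c" "x \<in> L_root \<beta>" "x \<in> Lg a"
  then show "br z x \<in> L_root (shift 1 \<beta>)"
    using br_skew[of z c x a] br_homogeneous_root_vector_H
    by (simp add: subspace_neg[OF subspace_root_space] subspace_scale[OF subspace_root_space])
qed

lemma br_root_bracket_phi_vanishing:
  assumes vanish1: "\<forall>y\<in>L_root (- \<beta>). \<forall>z\<in>L_root \<gamma>. br y z = 0"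
    and vanish2: "\<forall>z\<in>L_root \<gamma>. \<forall>x\<in>L_root \<beta>. br z x = 0"
    and x: "x \<in> L_root \<beta>" and y: "y \<in> L_root (- \<beta>)" and z: "z \<in> L_root \<gamma>"
  shows "br (br x y) (phi z) = 0 \<and> br (phi z) (br x y) = 0"
proof -
  define T where "T z = {u. br u (phi z) = 0 \<and> br (phi z) u = 0}" for z
  have subspace_T: "subspace (T z)" for z
    unfolding T_def by (rule subspaceI) (auto simp: br_add_left br_add_right br_scale_left br_scale_right)
  have "br x y \<in> T z'" if "z' \<in> L_root \<gamma>" "z' \<in> Lg c" for z' c
    using has_homogeneous_components_root_space has_homogeneous_components_root_space subspace_T x y
  proof (rule br_mem_by_homogeneous_components)
    fix a b u v assume "u \<in> L_root \<beta>" "u \<in> Lg a" "v \<in> L_root (- \<beta>)" "v \<in> Lg b"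
    then show "br u v \<in> T z'"
      using hom_jacobi_vanishing[of u a v b z' c] vanish1 vanish2 that by (simp add: T_def)
  qed
  moreover have "subspace {z. br x y \<in> T z}"
    unfolding T_def by (rule subspaceI) (auto simp: br_add_left br_add_right br_scale_left br_scale_right phi_add phi_scale)
  ultimately have "br x y \<in> T z"
    using mem_by_homogeneous_components[OF has_homogeneous_components_root_space _ z] by blast
  then show ?thesis by (simp add: T_def)
qed

section \<open>Connection of roots\<close>

lemma shift_inv_phi: "x \<in> H0 \<Longrightarrow> shift k f (inv phi x) = shift (Suc k) f x"
  by (simp add: shift_apply_H0 inv_phi_H0 funpow_Suc_right del: Int_iff funpow.simps)

lemma conn_sum_0: "conn_sum phi H0 al 0 = shift 0 (al 1)"
  by (rule ext) (simp add: conn_sum_def)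

lemma conn_sum_Suc: "conn_sum phi H0 al (Suc i) = shift 1 (conn_sum phi H0 al i) + shift 1 (al (i + 2))"
proof (rule ext)
  fix x show "conn_sum phi H0 al (Suc i) x = (shift 1 (conn_sum phi H0 al i) + shift 1 (al (i + 2))) x"
  proof (cases "x \<in> H0")
    case False
    then show ?thesis by (simp add: conn_sum_def shift_apply_outside del: Int_iff)
  next
    case True
    have lhs: "conn_sum phi H0 al (Suc i) x
        = shift (Suc i) (al 1) x + (\<Sum>j\<in>{2..Suc i + 1}. shift (Suc i + 2 - j) (al j) x)"
      by (simp only: conn_sum_def)
    have rhs: "(shift 1 (conn_sum phi H0 al i) + shift 1 (al (i + 2))) x
        = shift (Suc i) (al 1) x + (\<Sum>j\<in>{2..i + 1}. shift (i + 2 - j) (al j) (inv phi x))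
          + shift 1 (al (i + 2)) x"
      using True by (simp add: conn_sum_def shift_apply_H0 shift_inv_phi del: Int_iff)
    have "{2..Suc i + 1} = insert (i + 2) {2..i + 1}" by auto
    then have "(\<Sum>j\<in>{2..Suc i + 1}. shift (Suc i + 2 - j) (al j) x)
        = shift 1 (al (i + 2)) x + (\<Sum>j\<in>{2..i + 1}. shift (Suc i + 2 - j) (al j) x)"
      by simp
    also have "(\<Sum>j\<in>{2..i + 1}. shift (Suc i + 2 - j) (al j) x)
        = (\<Sum>j\<in>{2..i + 1}. shift (i + 2 - j) (al j) (inv phi x))"
      by (rule sum.cong) (auto simp: shift_inv_phi[OF True] Suc_diff_le)
    finally show ?thesis unfolding lhs rhs by (simp add: algebra_simps)
  qed
qed

lemma shift_pm_iff_signed: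
  "f \<in> {shift m \<beta> | m. True} \<union> {shift m (neg_fun \<beta>) | m. True} \<longleftrightarrow> (\<exists>m b. f = signed b (shift m \<beta>))"
  by (auto simp: signed_def neg_fun_eq shift_uminus split: if_splits)

text \<open>s i plays the role of the i-th partial expression conn_sum of the definition of
  connection (shifted by a power of \<phi>^-1), and b records the sign of \<plusminus>\<beta> at the end.\<close>
definition chain where
  "chain \<alpha> \<beta> \<longleftrightarrow> (\<exists>n s a m b. s 0 = shift a \<alpha> \<and> (\<forall>i\<le>n. s i \<in> \<Lambda>) \<and>
     (\<forall>i<n. \<exists>c\<in>\<Lambda>. s (Suc i) = shift 1 (s i) + shift 1 c) \<and> s n = signed b (shift m \<beta>))"

lemma chainI:
  assumes "s 0 = shift a \<alpha>" "\<And>i. i \<le> n \<Longrightarrow> s i \<in> \<Lambda>"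
    and "\<And>i. i < n \<Longrightarrow> \<exists>c\<in>\<Lambda>. s (Suc i) = shift 1 (s i) + shift 1 c"
    and "s n = signed b (shift m \<beta>)"
  shows "chain \<alpha> \<beta>"
  unfolding chain_def using assms by blast

lemma chainE:
  assumes "chain \<alpha> \<beta>"
  obtains s a n b m where "s 0 = shift a \<alpha>" "\<And>i. i \<le> n \<Longrightarrow> s i \<in> \<Lambda>"
    "\<And>i. i < n \<Longrightarrow> \<exists>c\<in>\<Lambda>. s (Suc i) = shift 1 (s i) + shift 1 c"
    "s n = signed b (shift m \<beta>)"
  using assms unfolding chain_def by blast

lemma connected_imp_chain:
  assumes \<beta>: "\<beta> \<in> \<Lambda>" and conn: "conn \<alpha> \<beta>"
  shows "chain \<alpha> \<beta>"
proof -
  obtain k al where k: "k \<ge> 1" and al: "\<forall>i\<in>{1..k}. al i \<in> \<Lambda>" and c: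
      "if k = 1 then
         al 1 \<in> {shift n \<alpha> | n. True} \<inter> ({shift m \<beta> | m. True} \<union> {shift m (neg_fun \<beta>) | m. True})
       else
         al 1 \<in> {shift n \<alpha> | n. True} \<and> (\<forall>i\<in>{1..k-2}. conn_sum phi H0 al i \<in> \<Lambda>) \<and>
         conn_sum phi H0 al (k - 1) \<in> {shift m \<beta> | m. True} \<union> {shift m (neg_fun \<beta>) | m. True}"
    using conn unfolding connected_def by blast
  let ?s = "conn_sum phi H0 al"
  have al1: "al 1 \<in> \<Lambda>" using al k by auto
  have s0: "?s 0 = al 1" using roots_dual[OF al1] by (simp add: conn_sum_0 shift_0)
  have "al 1 \<in> {shift n \<alpha> | n. True} \<and> (\<forall>i\<in>{1..k-2}. ?s i \<in> \<Lambda>) \<and>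
      ?s (k - 1) \<in> {shift m \<beta> | m. True} \<union> {shift m (neg_fun \<beta>) | m. True}"
  proof (cases "k = 1")
    case True
    then show ?thesis using c s0 by simp
  next
    case False
    then show ?thesis using c by simp
  qed
  then obtain a where a: "?s 0 = shift a \<alpha>"
    and mid: "\<forall>i\<in>{1..k-2}. ?s i \<in> \<Lambda>"
    and "?s (k - 1) \<in> {shift m \<beta> | m. True} \<union> {shift m (neg_fun \<beta>) | m. True}"
    using s0 by auto
  then obtain m b where last: "?s (k - 1) = signed b (shift m \<beta>)"
    unfolding shift_pm_iff_signed by blast
  show ?thesis
  proof (rule chainI[of ?s a \<alpha> "k - 1"])
    fix i assume "i \<le> k - 1"
    then consider "i = 0" | "i \<in> {1..k-2}" | "i = k - 1" by fastforce
    then show "?s i \<in> \<Lambda>" using s0 al1 mid last roots_signed roots_shift \<beta> by cases auto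
  next
    fix i assume "i < k - 1"
    then show "\<exists>c\<in>\<Lambda>. ?s (Suc i) = shift 1 (?s i) + shift 1 c"
      using al conn_sum_Suc[of al i] by force
  qed (use a last in auto)
qed

lemma chain_imp_connected:
  assumes chain: "chain \<alpha> \<beta>"
  shows "conn \<alpha> \<beta>"
proof -
  obtain s a n b m where s0: "s 0 = shift a \<alpha>" and sR: "\<And>i. i \<le> n \<Longrightarrow> s i \<in> \<Lambda>"
    and step: "\<And>i. i < n \<Longrightarrow> \<exists>c\<in>\<Lambda>. s (Suc i) = shift 1 (s i) + shift 1 c"
    and last: "s n = signed b (shift m \<beta>)"
    using chain by (rule chainE) (rule that)
  obtain c where c: "\<And>i. i < n \<Longrightarrow> c i \<in> \<Lambda> \<and> s (Suc i) = shift 1 (s i) + shift 1 (c i)"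
    using step by metis
  define al where "al j = (if j = 1 then s 0 else c (j - 2))" for j
  have conn_sum_s: "conn_sum phi H0 al i = s i" if "i \<le> n" for i
    using that
  proof (induction i)
    case 0
    then show ?case using sR[of 0] by (simp add: conn_sum_0 al_def shift_0 roots_dual)
  next
    case (Suc i)
    then show ?case using c[of i] by (simp add: conn_sum_Suc al_def)
  qed
  have al: "\<forall>i\<in>{1..n + 1}. al i \<in> \<Lambda>"
    using sR[of 0] c by (auto simp: al_def)
  let ?A = "{shift n \<alpha> | n. True}" and ?B = "{shift m \<beta> | m. True} \<union> {shift m (neg_fun \<beta>) | m. True}"
  have start: "al 1 \<in> ?A" using s0 by (auto simp: al_def)
  have end_B: "conn_sum phi H0 al n \<in> ?B"
    unfolding conn_sum_s[OF order_refl] shift_pm_iff_signed using last by blast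
  have al1: "al 1 = conn_sum phi H0 al 0" using conn_sum_s[of 0] by (simp add: al_def)
  show ?thesis
    unfolding connected_def
  proof (intro exI[of _ "n + 1"] exI[of _ al] conjI al)
    show "if n + 1 = 1 then al 1 \<in> ?A \<inter> ?B
      else al 1 \<in> ?A \<and> (\<forall>i\<in>{1..n + 1 - 2}. conn_sum phi H0 al i \<in> \<Lambda>) \<and>
        conn_sum phi H0 al (n + 1 - 1) \<in> ?B"
    proof (cases "n = 0")
      case True
      then have "al 1 \<in> ?A \<inter> ?B" using start end_B al1 by (intro IntI) simp_all
      then show ?thesis using True by simp
    next
      case False
      moreover have "\<forall>i\<in>{1..n - 1}. conn_sum phi H0 al i \<in> \<Lambda>" using conn_sum_s sR by auto
      ultimately show ?thesis using start end_B by simp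
    qed
  qed simp
qed

lemma connected_iff_chain: "\<beta> \<in> \<Lambda> \<Longrightarrow> conn \<alpha> \<beta> \<longleftrightarrow> chain \<alpha> \<beta>"
  using connected_imp_chain chain_imp_connected by blast

text \<open>Read backwards and composed with \<phi>^-2j at position j, a chain again has steps of the
  form t_(j+1) = t_j \<phi>^-1 + c \<phi>^-1, now with c = -(\<plusminus>c_i \<phi>^-(2j+1)).\<close>
lemma chain_sym:
  assumes chain: "chain \<alpha> \<beta>"
  shows "chain \<beta> \<alpha>"
proof -
  obtain s a n b m where s0: "s 0 = shift a \<alpha>" and sR: "\<And>i. i \<le> n \<Longrightarrow> s i \<in> \<Lambda>"
    and step: "\<And>i. i < n \<Longrightarrow> \<exists>c\<in>\<Lambda>. s (Suc i) = shift 1 (s i) + shift 1 c"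
    and last: "s n = signed b (shift m \<beta>)"
    using chain by (rule chainE) (rule that)
  define t where "t j = signed b (shift (2 * j) (s (n - j)))" for j
  show ?thesis
  proof (rule chainI[of t m \<beta> n b "a + 2 * n" \<alpha>])
    show "t 0 = shift m \<beta>"
      using last sR[of n] by (simp add: t_def shift_0 roots_dual signed_signed signed_def)
    show "t j \<in> \<Lambda>" for j unfolding t_def using sR by (intro roots_signed roots_shift) simp
    show "t n = signed b (shift (a + 2 * n) \<alpha>)" by (simp add: t_def s0 shift_shift)
  next
    fix j assume j: "j < n"
    then obtain c where c: "c \<in> \<Lambda>" "s (n - j) = shift 1 (s (n - Suc j)) + shift 1 c"
      using step[of "n - Suc j"] by (auto simp: Suc_diff_Suc)
    have "shift 1 (t j) = t (Suc j) + signed b (shift (2 * j + 2) c)"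
      unfolding t_def c(2) by (simp add: shift_signed shift_shift shift_add signed_add)
    then have "t (Suc j) = shift 1 (t j) + shift 1 (- signed b (shift (2 * j + 1) c))"
      by (simp add: shift_uminus shift_signed shift_shift)
    moreover have "- signed b (shift (2 * j + 1) c) \<in> \<Lambda>"
      using c by (intro roots_uminus roots_signed roots_shift)
    ultimately show "\<exists>c\<in>\<Lambda>. t (Suc j) = shift 1 (t j) + shift 1 c" by blast
  qed
qed

lemma chain_trans:
  assumes ab: "chain \<alpha> \<beta>" and bc: "chain \<beta> \<gamma>"
  shows "chain \<alpha> \<gamma>"
proof -
  obtain s a n b m where s0: "s 0 = shift a \<alpha>" and sR: "\<And>i. i \<le> n \<Longrightarrow> s i \<in> \<Lambda>"
    and s_step: "\<And>i. i < n \<Longrightarrow> \<exists>c\<in>\<Lambda>. s (Suc i) = shift 1 (s i) + shift 1 c"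
    and s_last: "s n = signed b (shift m \<beta>)"
    using ab by (rule chainE) (rule that)
  obtain t a' p b' m' where t0: "t 0 = shift a' \<beta>" and tR: "\<And>i. i \<le> p \<Longrightarrow> t i \<in> \<Lambda>"
    and t_step: "\<And>i. i < p \<Longrightarrow> \<exists>c\<in>\<Lambda>. t (Suc i) = shift 1 (t i) + shift 1 c"
    and t_last: "t p = signed b' (shift m' \<gamma>)"
    using bc by (rule chainE) (rule that)
  define u where "u i = (if i \<le> n then shift a' (s i) else signed b (shift m (t (i - n))))" for i
  have u_tail: "u i = signed b (shift m (t (i - n)))" if "n \<le> i" for i
    using that s_last t0 by (auto simp: u_def shift_signed shift_shift add.commute)
  show ?thesis
  proof (rule chainI[of u "a + a'" \<alpha> "n + p" "b = b'" "m' + m" \<gamma>])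
    show "u 0 = shift (a + a') \<alpha>" by (simp add: u_def s0 shift_shift)
    show "u (n + p) = signed (b = b') (shift (m' + m) \<gamma>)"
      using u_tail[of "n + p"] t_last by (simp add: shift_signed shift_shift signed_signed)
  next
    fix i assume i: "i \<le> n + p"
    show "u i \<in> \<Lambda>"
    proof (cases "i \<le> n")
      case True
      then show ?thesis using sR by (simp add: u_def roots_shift)
    next
      case False
      then show ?thesis using tR[of "i - n"] i by (simp add: u_def roots_shift roots_signed)
    qed
  next
    fix i assume i: "i < n + p"
    show "\<exists>c\<in>\<Lambda>. u (Suc i) = shift 1 (u i) + shift 1 c"
    proof (cases "i < n")
      case True
      then obtain c where "c \<in> \<Lambda>" "s (Suc i) = shift 1 (s i) + shift 1 c" using s_step by blast
      then show ?thesis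
        using True by (intro bexI[of _ "shift a' c"]) (auto simp: u_def shift_add shift_shift add.commute roots_shift)
    next
      case False
      then have "i - n < p" using i by arith
      then obtain c where c: "c \<in> \<Lambda>" "t (Suc (i - n)) = shift 1 (t (i - n)) + shift 1 c"
        using t_step by blast
      have "u (Suc i) = shift 1 (u i) + shift 1 (signed b (shift m c))"
        using False u_tail[of i] u_tail[of "Suc i"] c(2)
        by (simp add: Suc_diff_le shift_add shift_signed shift_shift signed_add add.commute)
      then show ?thesis using c(1) by (blast intro: roots_signed roots_shift)
    qed
  qed
qed

lemma chain_single: "c \<in> \<Lambda> \<Longrightarrow> c = shift a \<alpha> \<Longrightarrow> c = signed b (shift m \<beta>) \<Longrightarrow> chain \<alpha> \<beta>"
  by (rule chainI[of "\<lambda>_. c" a \<alpha> 0 b m \<beta>]) auto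

lemma connected_sym: "\<alpha> \<in> \<Lambda> \<Longrightarrow> \<beta> \<in> \<Lambda> \<Longrightarrow> conn \<alpha> \<beta> \<Longrightarrow> conn \<beta> \<alpha>"
  by (simp add: connected_iff_chain chain_sym)

lemma connected_trans: "\<beta> \<in> \<Lambda> \<Longrightarrow> \<gamma> \<in> \<Lambda> \<Longrightarrow> conn \<alpha> \<beta> \<Longrightarrow> conn \<beta> \<gamma> \<Longrightarrow> conn \<alpha> \<gamma>"
  by (simp add: connected_iff_chain) (rule chain_trans)

lemma connected_refl:
  assumes \<alpha>: "\<alpha> \<in> \<Lambda>" shows "conn \<alpha> \<alpha>"
  unfolding connected_iff_chain[OF \<alpha>]
  using \<alpha> by (rule chain_single[of _ 0 _ True 0]) (simp_all add: signed_def shift_0 roots_dual[OF \<alpha>])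

lemma connected_shift:
  assumes \<alpha>: "\<alpha> \<in> \<Lambda>" shows "conn \<alpha> (shift n \<alpha>)"
  unfolding connected_iff_chain[OF roots_shift[OF \<alpha>]]
  using roots_shift[OF \<alpha>] by (rule chain_single[of _ n _ True 0]) (simp_all add: signed_def shift_shift)

lemma connected_uminus:
  assumes \<alpha>: "\<alpha> \<in> \<Lambda>" shows "conn \<alpha> (- \<alpha>)"
  unfolding connected_iff_chain[OF roots_uminus[OF \<alpha>]]
  using \<alpha> by (rule chain_single[of _ 0 _ False 0]) (simp_all add: signed_def shift_0 roots_dual[OF \<alpha>] shift_uminus)

lemma connected_unshift:
  assumes \<alpha>: "\<alpha> \<in> \<Lambda>" shows "conn (unshift \<alpha>) \<alpha>"
  unfolding connected_iff_chain[OF \<alpha>]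
  using \<alpha> shift_unshift[OF roots_dual[OF \<alpha>], symmetric]
  by (rule chain_single[of _ 1 _ True 0]) (simp add: signed_def shift_0 roots_dual[OF \<alpha>])

lemma connected_shift_sum:
  assumes \<beta>: "\<beta> \<in> \<Lambda>" and \<gamma>: "\<gamma> \<in> \<Lambda>" and sum: "shift 1 (\<beta> + \<gamma>) \<in> \<Lambda>"
  shows "conn \<beta> (shift 1 (\<beta> + \<gamma>))"
  unfolding connected_iff_chain[OF sum]
proof (rule chainI[of "\<lambda>i. if i = 0 then \<beta> else shift 1 (\<beta> + \<gamma>)" 0 \<beta> 1 True 0])
  show "\<exists>c\<in>\<Lambda>. (if Suc i = 0 then \<beta> else shift 1 (\<beta> + \<gamma>)) =
      shift 1 (if i = 0 then \<beta> else shift 1 (\<beta> + \<gamma>)) + shift 1 c" if "i < 1" for i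
    using that \<gamma> by (auto simp: shift_add)
qed (use \<beta> sum in \<open>auto simp: shift_0 roots_dual signed_def shift_shift\<close>)

section \<open>The ideals \<open>L\<^sub>\<Lambda>\<^sub>\<alpha>\<close>\<close>

lemma br_nonzero_shift_sum_root:
  assumes \<beta>: "\<beta> \<in> \<Lambda>" and \<gamma>: "\<gamma> \<in> \<Lambda>" and x: "x \<in> L_root \<beta>" and y: "y \<in> L_root \<gamma>"
    and nonzero: "br x y \<noteq> 0" and sum: "\<beta> + \<gamma> \<noteq> 0"
  shows "shift 1 (\<beta> + \<gamma>) \<in> \<Lambda>"
proof -
  have "\<beta> + \<gamma> \<in> dual" using \<beta> \<gamma> roots_dual dual_plus by blast
  then show ?thesis
    using br_root_spaces[OF x y] nonzero sum shift_dual shift_nonzero by (auto simp: roots_iff)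
qed

lemma br_nonzero_imp_connected:
  assumes \<beta>: "\<beta> \<in> \<Lambda>" and \<gamma>: "\<gamma> \<in> \<Lambda>" and x: "x \<in> L_root \<beta>" and y: "y \<in> L_root \<gamma>"
    and nonzero: "br x y \<noteq> 0"
  shows "conn \<beta> \<gamma>"
proof (cases "\<beta> + \<gamma> = 0")
  case True
  then have "\<gamma> = - \<beta>" by (simp add: eq_neg_iff_add_eq_0 add.commute)
  then show ?thesis using connected_uminus[OF \<beta>] by simp
next
  case False
  let ?\<sigma> = "shift 1 (\<beta> + \<gamma>)"
  have \<sigma>: "?\<sigma> \<in> \<Lambda>" by (rule br_nonzero_shift_sum_root[OF \<beta> \<gamma> x y nonzero False])
  have "?\<sigma> = shift 1 (\<gamma> + \<beta>)" by (simp add: add.commute)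
  then have "conn \<gamma> ?\<sigma>" using connected_shift_sum[OF \<gamma> \<beta>] \<sigma> by simp
  then have "conn ?\<sigma> \<gamma>" by (rule connected_sym[OF \<gamma> \<sigma>])
  then show ?thesis using connected_shift_sum[OF \<beta> \<gamma> \<sigma>] connected_trans[OF \<sigma> \<gamma>] by blast
qed

text \<open>Write w = \<phi> z with z \<in> L_(\<gamma>\<phi>). Then [L_-\<beta>, z] = [z, L_\<beta>] = 0, since \<gamma>\<phi> is connected
  to \<gamma> but not to \<beta>, and the Hom-Jacobi identity kills [[x, y], \<phi> z].\<close>
lemma br_root_bracket_unconnected:
  assumes \<beta>: "\<beta> \<in> \<Lambda>" and \<gamma>: "\<gamma> \<in> \<Lambda>" and unconnected: "\<not> conn \<beta> \<gamma>"
    and x: "x \<in> L_root \<beta>" and y: "y \<in> L_root (- \<beta>)" and w: "w \<in> L_root \<gamma>"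
  shows "br (br x y) w = 0 \<and> br w (br x y) = 0"
proof -
  let ?\<delta> = "unshift \<gamma>"
  have \<delta>: "?\<delta> \<in> \<Lambda>" "conn ?\<delta> \<gamma>" using roots_unshift[OF \<gamma>] connected_unshift[OF \<gamma>] .
  have "\<not> conn \<beta> ?\<delta>" using connected_trans[OF \<delta>(1) \<gamma> _ \<delta>(2)] unconnected by blast
  have vanish1: "\<forall>y\<in>L_root (- \<beta>). \<forall>z\<in>L_root ?\<delta>. br y z = 0"
  proof (intro ballI, rule ccontr)
    fix y z assume "y \<in> L_root (- \<beta>)" "z \<in> L_root ?\<delta>" "br y z \<noteq> 0"
    then have "conn (- \<beta>) ?\<delta>" by (rule br_nonzero_imp_connected[OF roots_uminus[OF \<beta>] \<delta>(1)])
    then have "conn \<beta> ?\<delta>" by (rule connected_trans[OF roots_uminus[OF \<beta>] \<delta>(1) connected_uminus[OF \<beta>]])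
    with \<open>\<not> conn \<beta> ?\<delta>\<close> show False ..
  qed
  have vanish2: "\<forall>z\<in>L_root ?\<delta>. \<forall>x\<in>L_root \<beta>. br z x = 0"
  proof (intro ballI, rule ccontr)
    fix z x assume "z \<in> L_root ?\<delta>" "x \<in> L_root \<beta>" "br z x \<noteq> 0"
    then have "conn ?\<delta> \<beta>" by (rule br_nonzero_imp_connected[OF \<delta>(1) \<beta>])
    then have "conn \<beta> ?\<delta>" by (rule connected_sym[OF \<delta>(1) \<beta>])
    with \<open>\<not> conn \<beta> ?\<delta>\<close> show False ..
  qed
  show ?thesis
    using br_root_bracket_phi_vanishing[OF vanish1 vanish2 x y root_space_unshift[OF w]] by simp
qed

abbreviation "class_of \<alpha> \<equiv> root_class scale br phi H0 \<alpha>"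
abbreviation "L_class \<alpha> \<equiv> L_part scale br phi H0 (class_of \<alpha>)"

definition root_brackets where
  "root_brackets S = {br x y | x y \<beta>. \<beta> \<in> S \<and> x \<in> L_root \<beta> \<and> y \<in> L_root (neg_fun \<beta>)}"

definition root_vectors where
  "root_vectors S = (\<Union>\<beta>\<in>S. L_root \<beta>)"

abbreviation "generators S \<equiv> root_brackets S \<union> root_vectors S"

lemma L_part_eq_span: "L_part scale br phi H0 S = span (generators S)"
proof -
  have "H_part scale br phi H0 S = span (root_brackets S)"
    "V_part scale br phi H0 S = span (root_vectors S)"
    unfolding H_part_def V_part_def root_brackets_def root_vectors_def by simp_all
  moreover have "span (span A \<union> span B) = span (A \<union> B)" for A B
  proof (rule antisym)
    show "span (span A \<union> span B) \<subseteq> span (A \<union> B)"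
      by (rule span_minimal) (auto intro: span_mono[THEN subsetD])
    show "span (A \<union> B) \<subseteq> span (span A \<union> span B)"
      by (rule span_mono) (auto intro: span_base)
  qed
  ultimately show ?thesis unfolding L_part_def by simp
qed

lemma L_part_generatorE:
  assumes "p \<in> generators S"
  obtains (bracket) \<beta> x y where "\<beta> \<in> S" "x \<in> L_root \<beta>" "y \<in> L_root (- \<beta>)" "p = br x y"
    | (root) \<beta> where "\<beta> \<in> S" "p \<in> L_root \<beta>"
  using assms unfolding root_brackets_def root_vectors_def neg_fun_eq by blast

lemma root_brackets_H: "S \<subseteq> \<Lambda> \<Longrightarrow> root_brackets S \<subseteq> H"
  using H_part_roots span_superset[of "root_brackets \<Lambda>"]
  unfolding H_part_def root_brackets_def by blast

lemma root_class_iff: "\<beta> \<in> class_of \<alpha> \<longleftrightarrow> \<beta> \<in> \<Lambda> \<and> conn \<beta> \<alpha>"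
  by (simp add: root_class_def)

lemma root_class_roots: "class_of \<alpha> \<subseteq> \<Lambda>"
  by (auto simp: root_class_iff)

lemma root_class_connected:
  assumes \<alpha>: "\<alpha> \<in> \<Lambda>" and \<beta>: "\<beta> \<in> class_of \<alpha>" and \<gamma>: "\<gamma> \<in> \<Lambda>"
    and conn: "conn \<beta> \<gamma>"
  shows "\<gamma> \<in> class_of \<alpha>"
  using \<beta> \<gamma> connected_trans[OF _ \<alpha> connected_sym[OF _ \<gamma> conn]] by (auto simp: root_class_iff)

lemma root_class_shift:
  assumes \<alpha>: "\<alpha> \<in> \<Lambda>" and \<beta>: "\<beta> \<in> class_of \<alpha>"
  shows "shift n \<beta> \<in> class_of \<alpha>"
proof -
  have \<beta>': "\<beta> \<in> \<Lambda>" using \<beta> by (simp add: root_class_iff)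
  show ?thesis by (rule root_class_connected[OF \<alpha> \<beta> roots_shift[OF \<beta>'] connected_shift[OF \<beta>']])
qed

lemma root_class_unshift:
  assumes \<alpha>: "\<alpha> \<in> \<Lambda>" and \<beta>: "\<beta> \<in> class_of \<alpha>"
  shows "unshift \<beta> \<in> class_of \<alpha>"
proof -
  have \<beta>': "\<beta> \<in> \<Lambda>" using \<beta> by (simp add: root_class_iff)
  have "conn \<beta> (unshift \<beta>)"
    by (rule connected_sym[OF roots_unshift[OF \<beta>'] \<beta>' connected_unshift[OF \<beta>']])
  then show ?thesis by (rule root_class_connected[OF \<alpha> \<beta> roots_unshift[OF \<beta>']])
qed

lemma root_class_eq:
  assumes \<alpha>: "\<alpha> \<in> \<Lambda>" and \<beta>: "\<beta> \<in> \<Lambda>" and conn: "conn \<alpha> \<beta>"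
  shows "class_of \<alpha> = class_of \<beta>"
proof (rule set_eqI)
  have conn': "conn \<beta> \<alpha>" by (rule connected_sym[OF \<alpha> \<beta> conn])
  fix \<gamma>
  show "\<gamma> \<in> class_of \<alpha> \<longleftrightarrow> \<gamma> \<in> class_of \<beta>"
    unfolding root_class_iff using connected_trans[OF \<alpha> \<beta> _ conn] connected_trans[OF \<beta> \<alpha> _ conn'] by blast
qed

lemma subspace_L_class: "subspace (L_class \<alpha>)"
  by (simp add: L_part_eq_span)

lemma br_in_L_class:
  "\<beta> \<in> class_of \<alpha> \<Longrightarrow> x \<in> L_root \<beta> \<Longrightarrow> y \<in> L_root (- \<beta>) \<Longrightarrow> br x y \<in> L_class \<alpha>"
  unfolding L_part_eq_span by (rule span_base) (auto simp: root_brackets_def neg_fun_eq)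

lemma root_vector_in_L_class:
  "\<beta> \<in> class_of \<alpha> \<Longrightarrow> v \<in> L_root \<beta> \<Longrightarrow> v \<in> L_class \<alpha>"
  unfolding L_part_eq_span by (rule span_base) (auto simp: root_vectors_def)

lemma span_H_root_vectors: "span (H \<union> root_vectors \<Lambda>) = UNIV"
proof -
  have "(\<Union>i\<in>insert None (Some ` \<Lambda>). case i of None \<Rightarrow> H | Some \<alpha> \<Rightarrow> L_root \<alpha>) = H \<union> root_vectors \<Lambda>"
    unfolding root_vectors_def by auto
  then show ?thesis
    using split unfolding split_alg_def internal_direct_sum_def by simp
qed


lemma br_root_bracket_generator:
  assumes \<alpha>: "\<alpha> \<in> \<Lambda>" and \<beta>: "\<beta> \<in> class_of \<alpha>"
    and x: "x \<in> L_root \<beta>" and y: "y \<in> L_root (- \<beta>)" and q: "q \<in> H \<union> root_vectors \<Lambda>"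
  shows "br (br x y) q \<in> L_class \<alpha>"
proof -
  have \<beta>': "\<beta> \<in> \<Lambda>" using \<beta> root_class_roots by blast
  have xy_H: "br x y \<in> H"
    using root_brackets_H[OF root_class_roots] \<beta> x y unfolding root_brackets_def neg_fun_eq by blast
  from q show ?thesis
  proof
    assume "q \<in> H"
    then show ?thesis using br_H_H[OF xy_H] subspace_0[OF subspace_L_class] by simp
  next
    assume "q \<in> root_vectors \<Lambda>"
    then obtain \<gamma> where \<gamma>: "\<gamma> \<in> \<Lambda>" "q \<in> L_root \<gamma>" unfolding root_vectors_def by blast
    show ?thesis
    proof (cases "conn \<beta> \<gamma>")
      case True
      then have "\<gamma> \<in> class_of \<alpha>" by (rule root_class_connected[OF \<alpha> \<beta> \<gamma>(1)])
      then show ?thesis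
        by (rule root_vector_in_L_class[OF root_class_shift[OF \<alpha>] br_H_root_space[OF xy_H \<gamma>(2)]])
    next
      case False
      then have "br (br x y) q = 0" using br_root_bracket_unconnected[OF \<beta>' \<gamma>(1) False x y \<gamma>(2)] by simp
      then show ?thesis using subspace_0[OF subspace_L_class] by simp
    qed
  qed
qed

lemma br_root_vector_generator:
  assumes \<alpha>: "\<alpha> \<in> \<Lambda>" and \<beta>: "\<beta> \<in> class_of \<alpha>"
    and p: "p \<in> L_root \<beta>" and q: "q \<in> H \<union> root_vectors \<Lambda>"
  shows "br p q \<in> L_class \<alpha>"
proof -
  have \<beta>': "\<beta> \<in> \<Lambda>" using \<beta> root_class_roots by blast
  from q show ?thesis
  proof
    assume "q \<in> H"
    then show ?thesis
      using root_vector_in_L_class[OF root_class_shift[OF \<alpha> \<beta>] br_root_space_H[OF p]] by simp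
  next
    assume "q \<in> root_vectors \<Lambda>"
    then obtain \<gamma> where \<gamma>: "\<gamma> \<in> \<Lambda>" "q \<in> L_root \<gamma>" unfolding root_vectors_def by blast
    consider "br p q = 0" | "\<beta> + \<gamma> = 0" | "br p q \<noteq> 0" "\<beta> + \<gamma> \<noteq> 0" by blast
    then show ?thesis
    proof cases
      case 1
      then show ?thesis using subspace_0[OF subspace_L_class] by simp
    next
      case 2
      then have "\<gamma> = - \<beta>" by (simp add: eq_neg_iff_add_eq_0 add.commute)
      then show ?thesis using br_in_L_class[OF \<beta> p] \<gamma>(2) by simp
    next
      case 3
      have \<sigma>: "shift 1 (\<beta> + \<gamma>) \<in> \<Lambda>" by (rule br_nonzero_shift_sum_root[OF \<beta>' \<gamma>(1) p \<gamma>(2) 3])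
      have "shift 1 (\<beta> + \<gamma>) \<in> class_of \<alpha>"
        by (rule root_class_connected[OF \<alpha> \<beta> \<sigma> connected_shift_sum[OF \<beta>' \<gamma>(1) \<sigma>]])
      then show ?thesis by (rule root_vector_in_L_class[OF _ br_root_spaces[OF p \<gamma>(2)]])
    qed
  qed
qed

lemma L_class_br_closed:
  assumes \<alpha>: "\<alpha> \<in> \<Lambda>" and x: "x \<in> L_class \<alpha>"
  shows "br x y \<in> L_class \<alpha>"
proof -
  have gen: "br p q \<in> L_class \<alpha>"
    if p: "p \<in> generators (class_of \<alpha>)" and q: "q \<in> H \<union> root_vectors \<Lambda>" for p q
    using p
  proof (cases rule: L_part_generatorE)
    case (bracket \<beta> u v)
    then show ?thesis using br_root_bracket_generator[OF \<alpha> _ _ _ q] by simp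
  next
    case (root \<beta>)
    then show ?thesis using br_root_vector_generator[OF \<alpha> _ _ q] by simp
  qed
  have x': "x \<in> span (generators (class_of \<alpha>))" using x by (simp add: L_part_eq_span)
  have y': "y \<in> span (H \<union> root_vectors \<Lambda>)" using span_H_root_vectors by simp
  show ?thesis
    by (rule bilinear_span_subspace[of br, OF linear_br_right linear_br_left subspace_L_class gen x' y'])
qed

lemma phi_inv_phi_generator:
  assumes \<alpha>: "\<alpha> \<in> \<Lambda>"
    and p: "p \<in> generators (class_of \<alpha>)"
  shows "phi p \<in> L_class \<alpha> \<and> inv phi p \<in> L_class \<alpha>"
  using p
proof (cases rule: L_part_generatorE)
  case (bracket \<beta> x y)
  have "phi p = br (phi x) (phi y)" using bracket(4) by (simp add: phi_br)
  moreover have "phi (br (inv phi x) (inv phi y)) = p" using bracket(4) by (simp add: phi_br)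
  then have "inv phi p = br (inv phi x) (inv phi y)" by (metis inv_phi_phi)
  moreover have "phi y \<in> L_root (- shift 1 \<beta>)" "inv phi y \<in> L_root (- unshift \<beta>)"
    using root_space_shift_Suc[OF bracket(3)] root_space_unshift[OF bracket(3)]
    by (simp_all add: shift_uminus unshift_uminus)
  ultimately show ?thesis
    using br_in_L_class[OF root_class_shift[OF \<alpha> bracket(1)] root_space_shift_Suc[OF bracket(2)]]
      br_in_L_class[OF root_class_unshift[OF \<alpha> bracket(1)] root_space_unshift[OF bracket(2)]]
    by simp
next
  case (root \<beta>)
  then show ?thesis
    using root_vector_in_L_class[OF root_class_shift[OF \<alpha> root(1)] root_space_shift_Suc[OF root(2)]]
      root_vector_in_L_class[OF root_class_unshift[OF \<alpha> root(1)] root_space_unshift[OF root(2)]]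
    by simp
qed

lemma phi_image_L_class:
  assumes \<alpha>: "\<alpha> \<in> \<Lambda>" shows "phi ` L_class \<alpha> = L_class \<alpha>"
proof -
  have "span (generators (class_of \<alpha>)) \<subseteq> phi -` L_class \<alpha>" "span (generators (class_of \<alpha>)) \<subseteq> inv phi -` L_class \<alpha>"
    using phi_inv_phi_generator[OF \<alpha>]
    by (intro span_minimal module_hom.subspace_vimage[OF module_hom_phi subspace_L_class]
        module_hom.subspace_vimage[OF module_hom_inv_phi subspace_L_class]; blast)+
  then have phi_closed: "phi v \<in> L_class \<alpha>" and inv_closed: "inv phi v \<in> L_class \<alpha>"
    if "v \<in> L_class \<alpha>" for v
    using that L_part_eq_span[of "class_of \<alpha>"] by auto
  show ?thesis
  proof
    show "L_class \<alpha> \<subseteq> phi ` L_class \<alpha>"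
    proof
      fix v assume "v \<in> L_class \<alpha>"
      then show "v \<in> phi ` L_class \<alpha>" using inv_closed by (intro image_eqI[of _ _ "inv phi v"]) simp_all
    qed
  qed (use phi_closed in blast)
qed

lemma graded_subspace_L_class: "graded_subspace scale Lg (L_class \<alpha>)"
  unfolding graded_subspace_def
proof (intro conjI subspace_L_class antisym)
  let ?Gr = "span (\<Union>g. L_class \<alpha> \<inter> Lg g)"
  show "?Gr \<subseteq> L_class \<alpha>" by (rule span_minimal[OF _ subspace_L_class]) blast
  have "p \<in> ?Gr" if "p \<in> generators (class_of \<alpha>)" for p
    using that
  proof (cases rule: L_part_generatorE)
    case (bracket \<beta> x y)
    have "br x y \<in> ?Gr"
      using has_homogeneous_components_root_space has_homogeneous_components_root_space
        subspace_span bracket(2,3)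
    proof (rule br_mem_by_homogeneous_components)
      fix a b u v assume "u \<in> L_root \<beta>" "u \<in> Lg a" "v \<in> L_root (- \<beta>)" "v \<in> Lg b"
      then have "br u v \<in> L_class \<alpha> \<inter> Lg (a + b)" using br_in_L_class[OF bracket(1)] br_Lg by blast
      then show "br u v \<in> ?Gr" by (intro span_base) blast
    qed
    then show ?thesis using bracket(4) by simp
  next
    case (root \<beta>)
    show ?thesis
      using has_homogeneous_components_root_space subspace_span root(2)
    proof (rule mem_by_homogeneous_components)
      fix a v assume "v \<in> L_root \<beta>" "v \<in> Lg a"
      then show "v \<in> ?Gr" using root_vector_in_L_class[OF root(1)] by (intro span_base) blast
    qed
  qed
  then have "span (generators (class_of \<alpha>)) \<subseteq> ?Gr" by (intro span_minimal) auto
  then show "L_class \<alpha> \<subseteq> ?Gr" using L_part_eq_span[of "class_of \<alpha>"] by simp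
qed

lemma ideal_L_class:
  assumes "\<alpha> \<in> \<Lambda>" shows "ideal scale Lg br phi (L_class \<alpha>)"
  unfolding ideal_def using graded_subspace_L_class L_class_br_closed[OF assms] phi_image_L_class[OF assms]
  by blast

lemma H_part_eq_span: "H_part scale br phi H0 S = span (root_brackets S)"
  unfolding H_part_def root_brackets_def ..

lemma span_U_L_classes:
  assumes U: "span (U \<union> H_part scale br phi H0 \<Lambda>) = H"
  shows "span (U \<union> (\<Union>\<alpha>\<in>\<Lambda>. L_class \<alpha>)) = UNIV"
proof -
  let ?S = "span (U \<union> (\<Union>\<alpha>\<in>\<Lambda>. L_class \<alpha>))"
  have gens: "p \<in> ?S" if "p \<in> generators \<Lambda>" for p
    using that
  proof (cases rule: L_part_generatorE)
    case (bracket \<beta> x y)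
    then have "p \<in> L_class \<beta>" using br_in_L_class[of \<beta> \<beta>] connected_refl by (simp add: root_class_iff)
    then show ?thesis using bracket(1) by (blast intro: span_base)
  next
    case (root \<beta>)
    then have "p \<in> L_class \<beta>" using root_vector_in_L_class[of \<beta> \<beta>] connected_refl by (simp add: root_class_iff)
    then show ?thesis using root(1) by (blast intro: span_base)
  qed
  then have "H_part scale br phi H0 \<Lambda> \<subseteq> ?S"
    unfolding H_part_eq_span by (intro span_minimal) auto
  then have "span (U \<union> H_part scale br phi H0 \<Lambda>) \<subseteq> ?S" by (intro span_minimal) (auto intro: span_base)
  then have "H \<subseteq> ?S" by (simp only: U)
  then have "span (H \<union> root_vectors \<Lambda>) \<subseteq> ?S" using gens by (intro span_minimal) auto
  then show ?thesis using span_H_root_vectors by auto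
qed

lemma L_class_generators_orthogonal:
  assumes \<alpha>: "\<alpha> \<in> \<Lambda>" and \<beta>: "\<beta> \<in> \<Lambda>" and unconnected: "\<not> conn \<alpha> \<beta>"
    and p: "p \<in> generators (class_of \<alpha>)"
    and q: "q \<in> generators (class_of \<beta>)"
  shows "br p q = 0"
proof -
  have classes_unconnected: "\<not> conn \<gamma> \<delta>"
    if \<gamma>: "\<gamma> \<in> class_of \<alpha>" and \<delta>: "\<delta> \<in> class_of \<beta>" for \<gamma> \<delta>
  proof
    assume "conn \<gamma> \<delta>"
    have \<delta>': "\<delta> \<in> \<Lambda>" "conn \<delta> \<beta>" using \<delta> by (simp_all add: root_class_iff)
    have "\<delta> \<in> class_of \<alpha>"
      by (rule root_class_connected[OF \<alpha> \<gamma> \<delta>'(1) \<open>conn \<gamma> \<delta>\<close>])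
    then have "conn \<alpha> \<delta>" using connected_sym[OF \<delta>'(1) \<alpha>] by (simp add: root_class_iff)
    then show False using unconnected connected_trans[OF \<delta>'(1) \<beta> _ \<delta>'(2)] by blast
  qed
  have brackets_H: "root_brackets (class_of \<gamma>) \<subseteq> H" for \<gamma>
    by (rule root_brackets_H[OF root_class_roots])
  from p show ?thesis
  proof (cases rule: L_part_generatorE)
    case p_bracket: (bracket \<gamma> x y)
    have \<gamma>: "\<gamma> \<in> \<Lambda>" using p_bracket(1) root_class_roots by blast
    from q show ?thesis
    proof (cases rule: L_part_generatorE)
      case bracket
      then have "q \<in> root_brackets (class_of \<beta>)"
        unfolding root_brackets_def neg_fun_eq by blast
      moreover have "p \<in> root_brackets (class_of \<alpha>)"
        using p_bracket unfolding root_brackets_def neg_fun_eq by blast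
      ultimately show ?thesis using brackets_H br_H_H by blast
    next
      case (root \<delta>)
      have \<delta>: "\<delta> \<in> \<Lambda>" using root(1) root_class_roots by blast
      show ?thesis
        using br_root_bracket_unconnected[OF \<gamma> \<delta> classes_unconnected[OF p_bracket(1) root(1)]
            p_bracket(2,3) root(2)] p_bracket(4) by simp
    qed
  next
    case p_root: (root \<gamma>)
    have \<gamma>: "\<gamma> \<in> \<Lambda>" using p_root(1) root_class_roots by blast
    from q show ?thesis
    proof (cases rule: L_part_generatorE)
      case (bracket \<delta> x y)
      have \<delta>: "\<delta> \<in> \<Lambda>" using bracket(1) root_class_roots by blast
      have "\<not> conn \<delta> \<gamma>"
        using classes_unconnected[OF p_root(1) bracket(1)] connected_sym[OF \<delta> \<gamma>] by blast
      then show ?thesis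
        using br_root_bracket_unconnected[OF \<delta> \<gamma> _ bracket(2,3) p_root(2)] bracket(4) by simp
    next
      case (root \<delta>)
      have \<delta>: "\<delta> \<in> \<Lambda>" using root(1) root_class_roots by blast
      show ?thesis
        using br_nonzero_imp_connected[OF \<gamma> \<delta> p_root(2) root(2)]
          classes_unconnected[OF p_root(1) root(1)] by blast
    qed
  qed
qed

lemma L_class_orthogonal:
  assumes \<alpha>: "\<alpha> \<in> \<Lambda>" and \<beta>: "\<beta> \<in> \<Lambda>" and unconnected: "\<not> conn \<alpha> \<beta>"
    and x: "x \<in> L_class \<alpha>" and y: "y \<in> L_class \<beta>"
  shows "br x y = 0"
proof -
  have gen: "br p q \<in> {0}" if "p \<in> generators (class_of \<alpha>)" "q \<in> generators (class_of \<beta>)" for p q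
    using L_class_generators_orthogonal[OF \<alpha> \<beta> unconnected that] by simp
  have x': "x \<in> span (generators (class_of \<alpha>))" and y': "y \<in> span (generators (class_of \<beta>))"
    using x y by (simp_all add: L_part_eq_span)
  have "br x y \<in> {0}"
    by (rule bilinear_span_subspace[of br, OF linear_br_right linear_br_left subspace_single_0 gen x' y'])
  then show ?thesis by simp
qed

end

theorem mainTheorem10:
  fixes scale :: "'k::field \<Rightarrow> 'v::ab_group_add \<Rightarrow> 'v"
    and eps :: "'g::ab_group_add \<Rightarrow> 'g \<Rightarrow> 'k"
    and Lg :: "'g \<Rightarrow> 'v set"
    and br :: "'v \<Rightarrow> 'v \<Rightarrow> 'v"
    and phi :: "'v \<Rightarrow> 'v"
    and H U :: "'v set"
  defines "H0 \<equiv> H \<inter> Lg 0"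
  defines "\<Lambda> \<equiv> roots scale br phi H0"
  defines "I \<equiv> (\<lambda>\<alpha>. L_part scale br phi H0 (root_class scale br phi H0 \<alpha>))"
  assumes reg: "regular_hom_lie_color scale eps Lg br phi"
    and maxab: "maximal_abelian_graded_subalgebra scale Lg br phi H"
    and split: "split_alg scale br phi H H0"
    and symm: "symmetric_roots scale br phi H0"
    and U_sub: "module.subspace scale U" "U \<subseteq> H"
    and U_compl: "module.span scale (U \<union> H_part scale br phi H0 \<Lambda>) = H"
                 "U \<inter> H_part scale br phi H0 \<Lambda> = {0}"
  shows "(\<forall>\<alpha>\<in>\<Lambda>. ideal scale Lg br phi (I \<alpha>))
       \<and> (\<forall>\<alpha>\<in>\<Lambda>. \<forall>\<beta>\<in>\<Lambda>. connected scale br phi H0 \<alpha> \<beta> \<longrightarrow> I \<alpha> = I \<beta>)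
       \<and> module.span scale (U \<union> (\<Union>\<alpha>\<in>\<Lambda>. I \<alpha>)) = UNIV
       \<and> (\<forall>\<alpha>\<in>\<Lambda>. \<forall>\<beta>\<in>\<Lambda>. \<not> connected scale br phi H0 \<alpha> \<beta> \<longrightarrow>
            (\<forall>x\<in>I \<alpha>. \<forall>y\<in>I \<beta>. br x y = 0))"
proof -
  interpret regular_hom_lie_color_alg scale eps Lg br phi
    by (rule regular_hom_lie_color_alg.intro[OF reg])
  \<comment> \<open>of the hypotheses on \<open>U\<close> only \<open>span (U \<union> H_part \<Lambda>) = H\<close> is needed\<close>
  have H_part_H: "H_part scale br phi H0 \<Lambda> \<subseteq> H"
    using span_superset U_compl(1) by blast
  have abelian: "abelian_graded_subalgebra scale Lg br phi H"
    using maxab unfolding maximal_abelian_graded_subalgebra_def by blast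
  interpret split_hom_lie_color_alg scale eps Lg br phi H
    using abelian split symm H_part_H unfolding H0_def \<Lambda>_def
    by (intro split_hom_lie_color_alg.intro split_hom_lie_color_alg_axioms.intro
        regular_hom_lie_color_alg.intro[OF reg])
  show ?thesis
    unfolding I_def \<Lambda>_def H0_def
    using ideal_L_class root_class_eq span_U_L_classes[OF U_compl(1)[unfolded \<Lambda>_def H0_def]]
      L_class_orthogonal
    by simp
qed

end
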